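(* For each $m,\varepsilon>0$ and $(x,t)\in\varepsilon\mathbb{Z}^2$, $$\widetilde{A}_1(x,t,m,\varepsilon)=\pm\frac{im\varepsilon^2}{2\pi}\int_{-\pi/\varepsilon}^{\pi/\varepsilon}\frac{e^{ipx-i\omega_pt}\,dp}{\sqrt{m^2\varepsilon^2+\sin^2(p\varepsilon)}},$$ $$\widetilde{A}_2(x,t,m,\varepsilon)=\pm\frac{\varepsilon}{2\pi}\int_{-\pi/\varepsilon}^{\pi/\varepsilon}\Big(1+\frac{\sin(p\varepsilon)}{\sqrt{m^2\varepsilon^2+\sin^2(p\varepsilon)}}\Big)e^{ipx-i\omega_pt}\,dp,$$ where the minus sign in the expression for $\widetilde{A}_k$ is taken when $t<0$ and $(x+t)/\varepsilon+k$ is even (and the plus sign otherwise), and $\omega_p:=\frac{1}{\varepsilon}\arccos\Big(\frac{\cos p\varepsilon}{\sqrt{1+m^2\varepsilon^2}}\Big)$.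
   Context: Fix $\varepsilon,m>0$. For $\delta\in(0,1)$ let $A_k(x,t)=A_k(x,t,m,\varepsilon,\delta)$, $k\in\{1,2\}$, be the unique pair of complex-valued functions on $\{(x,t)\in\mathbb{R}^2:2x/\varepsilon,2t/\varepsilon,(x+t)/\varepsilon\in\mathbb{Z}\}$ satisfying: (1) for $2x/\varepsilon,2t/\varepsilon$ even, $A_1(x,t)=\frac{1}{\sqrt{1+m^2\varepsilon^2}}(A_1(x+\frac{\varepsilon}{2},t-\frac{\varepsilon}{2})+m\varepsilon A_2(x+\frac{\varepsilon}{2},t-\frac{\varepsilon}{2}))$ and $A_2(x,t)=\frac{1}{\sqrt{1+m^2\varepsilon^2}}(A_2(x-\frac{\varepsilon}{2},t-\frac{\varepsilon}{2})-m\varepsilon A_1(x-\frac{\varepsilon}{2},t-\frac{\varepsilon}{2}))+2\delta_{x0}\delta_{t0}$; (2) for $2x/\varepsilon,2t/\varepsilon$ odd, $A_1(x,t)=\frac{1}{\sqrt{1-\delta^2}}(A_1(x+\frac{\varepsilon}{2},t-\frac{\varepsilon}{2})-i\delta A_2(x+\frac{\varepsilon}{2},t-\frac{\varepsilon}{2}))$ and $A_2(x,t)=\frac{1}{\sqrt{1-\delta^2}}(A_2(x-\frac{\varepsilon}{2},t-\frac{\varepsilon}{2})+i\delta A_1(x-\frac{\varepsilon}{2},t-\frac{\varepsilon}{2}))$; (3) $\sum_{(x,t)\in\varepsilon\mathbb{Z}^2}(|A_1(x,t)|^2+|A_2(x,t)|^2)<\infty$. (Existence and uniqueness of such a pair is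 known.) Here $\delta_{xy}$ is the Kronecker delta. The lattice propagator is $\widetilde{A}_k(x,t,m,\varepsilon):=\lim_{\delta\searrow0}A_k(x,t,m,\varepsilon,\delta)$ for $(x,t)\in\varepsilon\mathbb{Z}^2$ (this limit is known to exist). *)

theory Defs
  imports "HOL-Analysis.Analysis"
begin

definition even_real :: "real \<Rightarrow> bool" where
  "even_real r \<longleftrightarrow> (\<exists>n::int. r = of_int n \<and> even n)"

definition odd_real :: "real \<Rightarrow> bool" where
  "odd_real r \<longleftrightarrow> (\<exists>n::int. r = of_int n \<and> odd n)"

definition lat :: "real \<Rightarrow> (real \<times> real) set" where
  "lat \<epsilon> = {(x, t). 2 * x / \<epsilon> \<in> \<int> \<and> 2 * t / \<epsilon> \<in> \<int> \<and> (x + t) / \<epsilon> \<in> \<int>}"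

text \<open>Conditions (1)-(3) of the definition; functions are taken to vanish off the lattice
  so that "the unique pair of functions on the lattice" is a unique pair of HOL functions.\<close>
definition is_sol ::
  "real \<Rightarrow> real \<Rightarrow> real \<Rightarrow> (real \<Rightarrow> real \<Rightarrow> complex) \<Rightarrow> (real \<Rightarrow> real \<Rightarrow> complex) \<Rightarrow> bool" where
  "is_sol m \<epsilon> \<delta> A1 A2 \<longleftrightarrow>
     (\<forall>x t. (x, t) \<notin> lat \<epsilon> \<longrightarrow> A1 x t = 0 \<and> A2 x t = 0) \<and>
     (\<forall>x t. (x, t) \<in> lat \<epsilon> \<and> even_real (2 * x / \<epsilon>) \<and> even_real (2 * t / \<epsilon>) \<longrightarrow>
        A1 x t = complex_of_real (1 / sqrt (1 + m\<^sup>2 * \<epsilon>\<^sup>2)) *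
                 (A1 (x + \<epsilon>/2) (t - \<epsilon>/2) + complex_of_real (m * \<epsilon>) * A2 (x + \<epsilon>/2) (t - \<epsilon>/2)) \<and>
        A2 x t = complex_of_real (1 / sqrt (1 + m\<^sup>2 * \<epsilon>\<^sup>2)) *
                 (A2 (x - \<epsilon>/2) (t - \<epsilon>/2) - complex_of_real (m * \<epsilon>) * A1 (x - \<epsilon>/2) (t - \<epsilon>/2))
                 + (if x = 0 \<and> t = 0 then 2 else 0)) \<and>
     (\<forall>x t. (x, t) \<in> lat \<epsilon> \<and> odd_real (2 * x / \<epsilon>) \<and> odd_real (2 * t / \<epsilon>) \<longrightarrow>
        A1 x t = complex_of_real (1 / sqrt (1 - \<delta>\<^sup>2)) *
                 (A1 (x + \<epsilon>/2) (t - \<epsilon>/2) - \<i> * complex_of_real \<delta> * A2 (x + \<epsilon>/2) (t - \<epsilon>/2)) \<and>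
        A2 x t = complex_of_real (1 / sqrt (1 - \<delta>\<^sup>2)) *
                 (A2 (x - \<epsilon>/2) (t - \<epsilon>/2) + \<i> * complex_of_real \<delta> * A1 (x - \<epsilon>/2) (t - \<epsilon>/2))) \<and>
     ((\<lambda>(a::int, b::int). (cmod (A1 (\<epsilon> * of_int a) (\<epsilon> * of_int b)))\<^sup>2
                          + (cmod (A2 (\<epsilon> * of_int a) (\<epsilon> * of_int b)))\<^sup>2) summable_on UNIV)"

definition A_sol :: "real \<Rightarrow> real \<Rightarrow> real \<Rightarrow> (real \<Rightarrow> real \<Rightarrow> complex) \<times> (real \<Rightarrow> real \<Rightarrow> complex)" where
  "A_sol m \<epsilon> \<delta> = (THE p. is_sol m \<epsilon> \<delta> (fst p) (snd p))"

definition A1t :: "real \<Rightarrow> real \<Rightarrow> real \<Rightarrow> real \<Rightarrow> complex" where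
  "A1t x t m \<epsilon> = Lim (at_right 0) (\<lambda>\<delta>. fst (A_sol m \<epsilon> \<delta>) x t)"

definition A2t :: "real \<Rightarrow> real \<Rightarrow> real \<Rightarrow> real \<Rightarrow> complex" where
  "A2t x t m \<epsilon> = Lim (at_right 0) (\<lambda>\<delta>. snd (A_sol m \<epsilon> \<delta>) x t)"

definition omega :: "real \<Rightarrow> real \<Rightarrow> real \<Rightarrow> real" where
  "omega m \<epsilon> p = (1 / \<epsilon>) * arccos (cos (p * \<epsilon>) / sqrt (1 + m\<^sup>2 * \<epsilon>\<^sup>2))"

definition sgnA :: "nat \<Rightarrow> real \<Rightarrow> real \<Rightarrow> real \<Rightarrow> complex" where
  "sgnA k x t \<epsilon> = (if t < 0 \<and> even_real ((x + t) / \<epsilon> + real k) then -1 else 1)"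

end

theory Submission
  imports Defs
begin

(* One time step of rules (1)-(2), restricted to the even sublattice (\<epsilon> a, \<epsilon> s), is in
   Fourier space multiplication by a unimodular 2x2 matrix W(p) whose trace has imaginary part
   proportional to \<delta>.  For \<delta> > 0 its eigenvalues satisfy |\<lambda>_s| < 1 < |\<lambda>_u|,
   so the two-sided Green function G(t) = \<lambda>_s^t P_s e (t \<ge> 0), -\<lambda>_u^t P_u e (t < 0)
   decays exponentially in t, and its Fourier coefficients are a square-summable solution.
   Any other solution differs from it by a square-summable solution of the homogeneous recursion,
   and pairing that with the Green function of the transposed, time-reversed system shows that
   it vanishes.  G depends continuously on \<delta> \<in> [0, 1), so the limit \<delta> \<rightarrow> 0 is the
   Fourier coefficient of the Green function at \<delta> = 0, where \<lambda>_s = e^(-i \<omega>_p \<epsilon>) and the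
   spectral projections are explicit.  For t < 0 the substitution p \<mapsto> p + \<pi>/\<epsilon>, which
   maps \<omega>_p \<epsilon> to \<pi> - \<omega>_p \<epsilon>, turns \<lambda>_u^t into \<plusminus>\<lambda>_s^t; this produces the sign. *)

section \<open>Fourier coefficients on [-\<pi>, \<pi>]\<close>

definition fourier_coeff :: "(real \<Rightarrow> complex) \<Rightarrow> int \<Rightarrow> complex" where
  "fourier_coeff g k = integral {-pi..pi} (\<lambda>p. cis (p * of_int k) * g p) / (2 * pi)"

lemma has_integral_cis_int:
  "((\<lambda>p. cis (p * of_int k)) has_integral (if k = 0 then 2 * pi else 0)) {-pi..pi}"
proof (cases "k = 0")
  case True
  then show ?thesis
    using has_integral_const_real[of "1::complex" "-pi" pi] by (simp add: scaleR_conv_of_real)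
next
  case False
  define F where "F p = cis (p * of_int k) / (\<i> * of_int k)" for p
  have "(F has_vector_derivative cis (p * of_int k)) (at p within {-pi..pi})" for p
    unfolding F_def has_vector_derivative_def
    by (rule derivative_eq_intros refl | use False in \<open>auto simp: scaleR_conv_of_real field_simps\<close>)+
  then have "((\<lambda>p. cis (p * of_int k)) has_integral F pi - F (-pi)) {-pi..pi}"
    by (intro fundamental_theorem_of_calculus) auto
  moreover have "F pi = F (-pi)"
    unfolding F_def by (simp add: cis.code)
  ultimately show ?thesis
    using False by simp
qed

lemma fourier_coeff_const: "fourier_coeff (\<lambda>p. c) k = (if k = 0 then c else 0)"
proof -
  have "integral {-pi..pi} (\<lambda>p. cis (p * of_int k) * c) = (if k = 0 then 2 * pi * c else 0)"
    using integral_unique[OF has_integral_mult_left[OF has_integral_cis_int, of k c]]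
    by (cases "k = 0") (simp_all add: scaleR_conv_of_real)
  then show ?thesis
    by (simp add: fourier_coeff_def)
qed

lemma fourier_coeff_cis_mult:
  "fourier_coeff (\<lambda>p. cis (p * of_int j) * g p) k = fourier_coeff g (k + j)"
  unfolding fourier_coeff_def by (simp add: mult.assoc[symmetric] cis_mult distrib_left)

lemma fourier_coeff_cmult: "fourier_coeff (\<lambda>p. c * g p) k = c * fourier_coeff g k"
  unfolding fourier_coeff_def by (simp add: mult.left_commute)

lemma fourier_coeff_uminus: "fourier_coeff (\<lambda>p. - g p) k = - fourier_coeff g k"
  using fourier_coeff_cmult[of "-1" g k] by simp

lemma fourier_coeff_add:
  assumes "continuous_on {-pi..pi} g" "continuous_on {-pi..pi} h"
  shows "fourier_coeff (\<lambda>p. g p + h p) k = fourier_coeff g k + fourier_coeff h k"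
  unfolding fourier_coeff_def distrib_left add_divide_distrib[symmetric]
  by (subst integral_add) (auto intro!: integrable_continuous_interval continuous_intros assms)

lemma fourier_coeff_trig_sum:
  assumes "finite F"
  shows "fourier_coeff (\<lambda>p. \<Sum>l\<in>F. c l * cis (- (p * of_int l))) k = (if k \<in> F then c k else 0)"
proof -
  have "((\<lambda>p. \<Sum>l\<in>F. c l * cis (p * of_int (k - l))) has_integral
          (\<Sum>l\<in>F. c l * (if k - l = 0 then 2 * pi else 0))) {-pi..pi}"
    by (intro has_integral_sum assms has_integral_mult_right has_integral_cis_int)
  moreover have "(\<Sum>l\<in>F. c l * (if k - l = 0 then 2 * pi else 0)) = (if k \<in> F then 2 * pi * c k else 0)"
  proof -
    have delta: "(\<lambda>l. c l * (if k - l = 0 then 2 * pi else 0)) = (\<lambda>l. if k = l then 2 * pi * c k else 0)"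
      by auto
    show ?thesis
      unfolding delta using assms by (simp add: sum.delta)
  qed
  ultimately show ?thesis
    unfolding fourier_coeff_def
    by (simp add: integral_unique sum_distrib_left mult_ac cis_mult algebra_simps)
qed

lemma continuous_on_fourier_coeff:
  assumes "continuous_on (U \<times> {-pi..pi}) (\<lambda>(u, p). g u p)"
  shows "continuous_on U (\<lambda>u. fourier_coeff (g u) k)"
proof -
  have "continuous_on (U \<times> cbox (-pi) pi) (\<lambda>(u, p). cis (p * of_int k) * g u p)"
    using assms by (auto simp: split_beta intro!: continuous_intros)
  from integral_continuous_on_param[OF this] show ?thesis
    unfolding fourier_coeff_def by (auto intro!: continuous_intros)
qed

lemma integral_mult_cnj_trig_sum:
  assumes "continuous_on {-pi..pi} u" "finite F"
  shows "((\<lambda>p. u p * cnj (\<Sum>l\<in>F. c l * cis (- (p * of_int l)))) has_integral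
           2 * pi * (\<Sum>l\<in>F. cnj (c l) * fourier_coeff u l)) {-pi..pi}"
proof -
  have "((\<lambda>p. \<Sum>l\<in>F. cnj (c l) * (cis (p * of_int l) * u p)) has_integral
           (\<Sum>l\<in>F. cnj (c l) * integral {-pi..pi} (\<lambda>p. cis (p * of_int l) * u p))) {-pi..pi}"
    by (intro has_integral_sum assms has_integral_mult_right integrable_integral
          integrable_continuous_interval continuous_intros)
  then show ?thesis
    by (simp add: fourier_coeff_def sum_distrib_left sum_distrib_right cis_cnj mult_ac)
qed

lemma bessel_inequality:
  assumes g: "continuous_on {-pi..pi} g" and F: "finite F"
  shows "(\<Sum>k\<in>F. (norm (fourier_coeff g k))\<^sup>2) \<le> integral {-pi..pi} (\<lambda>p. (norm (g p))\<^sup>2) / (2 * pi)"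
proof -
  define c where "c = fourier_coeff g"
  define h where "h p = (\<Sum>l\<in>F. c l * cis (- (p * of_int l)))" for p
  define S where "S = (\<Sum>k\<in>F. (norm (c k))\<^sup>2)"
  have h: "continuous_on {-pi..pi} h"
    unfolding h_def by (intro continuous_intros)
  have norm_sq: "cnj z * z = of_real ((norm z)\<^sup>2)" for z
    by (metis complex_norm_square mult.commute)
  have "((\<lambda>p. g p * cnj (h p)) has_integral 2 * pi * S) {-pi..pi}"
    using integral_mult_cnj_trig_sum[OF g F, of c] by (simp add: h_def S_def c_def norm_sq)
  from has_integral_Re[OF this] have gh: "((\<lambda>p. Re (g p * cnj (h p))) has_integral 2 * pi * S) {-pi..pi}"
    by simp
  have "fourier_coeff h l = c l" if "l \<in> F" for l
    using fourier_coeff_trig_sum[OF F, of c l] that by (simp add: h_def[abs_def])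
  then have "((\<lambda>p. h p * cnj (h p)) has_integral 2 * pi * S) {-pi..pi}"
    using integral_mult_cnj_trig_sum[OF h F, of c] by (simp add: h_def[symmetric] S_def norm_sq)
  from has_integral_Re[OF this] have hh: "((\<lambda>p. Re (h p * cnj (h p))) has_integral 2 * pi * S) {-pi..pi}"
    by simp
  define G where "G = integral {-pi..pi} (\<lambda>p. (norm (g p))\<^sup>2)"
  have gg: "((\<lambda>p. (norm (g p))\<^sup>2) has_integral G) {-pi..pi}"
    unfolding G_def by (intro integrable_integral integrable_continuous_interval continuous_intros g)
  have expand: "(norm (g p - h p))\<^sup>2 = (norm (g p))\<^sup>2 - 2 * Re (g p * cnj (h p)) + Re (h p * cnj (h p))" for p
    by (simp add: cmod_power2 power2_diff power2_eq_square[of "Re _"] power2_eq_square[of "Im _"] algebra_simps)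
  have "((\<lambda>p. (norm (g p - h p))\<^sup>2) has_integral G - 2 * (2 * pi * S) + 2 * pi * S) {-pi..pi}"
    unfolding expand by (intro has_integral_add has_integral_diff has_integral_mult_right gg gh hh)
  then have "0 \<le> G - 2 * (2 * pi * S) + 2 * pi * S"
    by (rule has_integral_nonneg) auto
  then show ?thesis
    by (simp add: S_def c_def G_def field_simps)
qed

lemma integral_shift_periodic:
  fixes f :: "real \<Rightarrow> 'a::banach"
  assumes f: "continuous_on UNIV f" and periodic: "\<And>q. f (q + 2 * pi) = f q"
    and c: "0 \<le> c" "c \<le> 2 * pi"
  shows "integral {-pi..pi} (\<lambda>q. f (q + c)) = integral {-pi..pi} f"
proof -
  have int: "f integrable_on {a..b}" for a b
    by (rule integrable_continuous_interval) (rule continuous_on_subset[OF f], simp)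
  have "integral {-pi..pi} (\<lambda>q. f (q + c)) = integral {-pi + c..pi + c} f"
    using integral_shift_Icc_real[of "-pi" pi f c] by (simp add: o_def add.commute)
  also have "\<dots> = integral {-pi + c..pi} f + integral {pi..pi + c} f"
    using c by (intro Henstock_Kurzweil_Integration.integral_combine[symmetric] int) auto
  also have "integral {pi..pi + c} f = integral {-pi..-pi + c} f"
    using integral_shift_Icc_real[of "-pi" "-pi + c" f "2 * pi"] periodic
    by (simp add: o_def add.commute)
  also have "integral {-pi + c..pi} f + integral {-pi..-pi + c} f = integral {-pi..pi} f"
    using c by (subst add.commute, intro Henstock_Kurzweil_Integration.integral_combine int) auto
  finally show ?thesis .
qed

lemma fourier_coeff_shift_pi:
  assumes h: "continuous_on UNIV h" and periodic: "\<And>q. h (q + 2 * pi) = h q"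
  shows "fourier_coeff h k = (if even k then 1 else -1) * fourier_coeff (\<lambda>q. h (q + pi)) k"
proof -
  define f where "f q = cis (q * of_int k) * h q" for q
  have cis_int: "cis (pi * of_int j) = (if even j then 1 else -1)" for j
    by (simp add: complex_eq_iff)
  have "cis ((q + 2 * pi) * of_int k) = cis (q * of_int k) * cis (pi * of_int (2 * k))" for q
    by (simp add: cis_mult algebra_simps)
  moreover have "cis (pi * of_int (2 * k)) = 1"
    by (simp only: cis_int) simp
  ultimately have "f (q + 2 * pi) = f q" for q
    by (simp add: f_def periodic)
  then have "integral {-pi..pi} f = integral {-pi..pi} (\<lambda>q. f (q + pi))"
    by (intro integral_shift_periodic[symmetric]) (auto simp: f_def intro!: continuous_intros h)
  also have "(\<lambda>q. f (q + pi)) = (\<lambda>q. cis (pi * of_int k) * (cis (q * of_int k) * h (q + pi)))"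
    by (simp add: f_def cis_mult algebra_simps)
  finally show ?thesis
    by (simp add: fourier_coeff_def f_def cis_int)
qed

lemma integral_rescale:
  fixes F :: "real \<Rightarrow> complex"
  assumes e: "\<epsilon> > 0" and F: "continuous_on {-pi..pi} F"
  shows "integral {-pi/\<epsilon>..pi/\<epsilon>} (\<lambda>p. F (p * \<epsilon>)) = integral {-pi..pi} F / \<epsilon>"
proof -
  have "(F has_integral integral {-pi..pi} F) (cbox (-pi) pi)"
    using integrable_continuous_interval[OF F] by (simp add: has_integral_iff)
  from has_integral_affinity'[OF this e, of 0]
  have "((\<lambda>x. F (\<epsilon> * x)) has_integral (integral {-pi..pi} F /\<^sub>R \<epsilon>)) {-pi/\<epsilon>..pi/\<epsilon>}"
    by (simp add: divide_inverse mult.commute)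
  then show ?thesis
    by (simp add: integral_unique mult.commute scaleR_conv_of_real divide_inverse)
qed

section \<open>Trigonometric symbols and the lattice operators they define\<close>

datatype trig_poly = Trig complex complex complex

primrec trig_eval :: "trig_poly \<Rightarrow> real \<Rightarrow> complex" where
  "trig_eval (Trig a b c) p = a + b * cis p + c * cis (- p)"

primrec trig_reflect :: "trig_poly \<Rightarrow> trig_poly" where
  "trig_reflect (Trig a b c) = Trig a c b"

fun trig_shift :: "trig_poly \<Rightarrow> (int \<times> int \<Rightarrow> complex) \<Rightarrow> int \<times> int \<Rightarrow> complex" where
  "trig_shift (Trig a b c) f (x, t) = a * f (x, t) + b * f (x + 1, t) + c * f (x - 1, t)"

lemma trig_eval_reflect: "trig_eval (trig_reflect c) p = trig_eval c (- p)"
  by (cases c) simp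

lemma trig_eval_periodic: "trig_eval c (p + 2 * pi) = trig_eval c p"
proof -
  have "cis (p + 2 * pi) = cis p"
    by (simp add: complex_eq_iff)
  moreover from this have "cis (- (p + 2 * pi)) = cis (- p)"
    by (metis cis_inverse)
  ultimately show ?thesis
    by (cases c) simp
qed

lemma continuous_on_trig_eval [continuous_intros]:
  "continuous_on S f \<Longrightarrow> continuous_on S (\<lambda>z. trig_eval c (f z))"
  by (cases c) (auto intro!: continuous_intros)

lemma fourier_coeff_trig_mult:
  assumes "continuous_on {-pi..pi} (g t)"
  shows "fourier_coeff (\<lambda>p. trig_eval c p * g t p) x = trig_shift c (\<lambda>(x, t). fourier_coeff (g t) x) (x, t)"
proof (cases c)
  case (Trig a b c')
  have "fourier_coeff (\<lambda>p. cis (p * of_int j) * g t p) x = fourier_coeff (g t) (x + j)" for j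
    by (rule fourier_coeff_cis_mult)
  from this[of 1] this[of "-1"] show ?thesis
    unfolding Trig trig_eval.simps distrib_right
    by (simp add: fourier_coeff_add fourier_coeff_cmult mult.assoc continuous_intros assms)
qed

lemma trig_shift_translate:
  "trig_shift c (\<lambda>(x, t). h (x + x0, t + t0)) (x, t) = trig_shift c h (x + x0, t + t0)"
  by (cases c) (simp add: algebra_simps)

lemma trig_shift_time_reflect:
  "trig_shift c (\<lambda>(x, t). h (x, - t)) (x, t) = trig_shift c h (x, - t)"
  by (cases c) simp

lemma trig_shift_diff: "trig_shift c (\<lambda>z. f z - g z) z = trig_shift c f z - trig_shift c g z"
  by (cases c, cases z) (simp add: algebra_simps)

section \<open>Square-summable lattice functions and their pairing\<close>

definition square_summable :: "('a \<Rightarrow> complex) \<Rightarrow> bool" where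
  "square_summable f \<longleftrightarrow> (\<lambda>z. (norm (f z))\<^sup>2) summable_on UNIV"

lemma square_summable_reindex:
  assumes f: "square_summable f" and g: "inj g"
  shows "square_summable (\<lambda>z. f (g z))"
proof -
  have "(\<lambda>z. (norm (f z))\<^sup>2) summable_on range g"
    using f summable_on_subset by (auto simp: square_summable_def)
  then show ?thesis
      using summable_on_reindex[OF g, of "\<lambda>z. (norm (f z))\<^sup>2"] by (simp add: square_summable_def o_def)
qed

lemma square_summable_space_shift:
  fixes f :: "int \<times> int \<Rightarrow> complex"
  shows "square_summable f \<Longrightarrow> square_summable (\<lambda>(x, t). f (x + j, t))"
  using square_summable_reindex[of f "\<lambda>(x, t). (x + j, t)"]
  by (simp add: inj_on_def split_beta')

lemma square_summable_add:
  assumes "square_summable f" "square_summable g"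
  shows "square_summable (\<lambda>z. f z + g z)"
proof -
  have bound: "(norm (a + b))\<^sup>2 \<le> 2 * (norm a)\<^sup>2 + 2 * (norm b)\<^sup>2" for a b :: complex
  proof -
    have "(norm (a + b))\<^sup>2 \<le> (norm a + norm b)\<^sup>2"
      by (simp add: power_mono norm_triangle_ineq)
    also have "\<dots> \<le> 2 * (norm a)\<^sup>2 + 2 * (norm b)\<^sup>2"
      using sum_squares_bound[of "norm a" "norm b"] unfolding power2_sum by linarith
    finally show ?thesis .
  qed
  have "(\<lambda>z. 2 * (norm (f z))\<^sup>2 + 2 * (norm (g z))\<^sup>2) summable_on UNIV"
    using assms unfolding square_summable_def by (intro summable_on_add summable_on_cmult_right)
  then show ?thesis
    unfolding square_summable_def by (rule summable_on_comparison_test) (simp_all add: bound)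
qed

lemma square_summable_cmult:
  "square_summable f \<Longrightarrow> square_summable (\<lambda>z. c * f z)"
  unfolding square_summable_def norm_mult power_mult_distrib by (rule summable_on_cmult_right)

lemma square_summable_diff:
  "square_summable f \<Longrightarrow> square_summable g \<Longrightarrow> square_summable (\<lambda>z. f z - g z)"
  using square_summable_add[of f "\<lambda>z. - 1 * g z"] square_summable_cmult[of g "- 1"] by simp

lemma square_summable_trig_shift:
  assumes "square_summable f"
  shows "square_summable (trig_shift c f)"
proof (cases c)
  case (Trig a b c')
  have "trig_shift c f = (\<lambda>z. a * f z + b * (\<lambda>(x, t). f (x + 1, t)) z + c' * (\<lambda>(x, t). f (x + - 1, t)) z)"
    by (rule ext, case_tac z) (simp add: Trig)
  then show ?thesis
    by (simp only:) (intro square_summable_add square_summable_cmult square_summable_space_shift assms)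
qed

lemma summable_on_mult_square_summable:
  assumes "square_summable f" "square_summable g"
  shows "(\<lambda>z. f z * g z) summable_on UNIV"
proof (rule abs_summable_summable)
  have sum: "(\<lambda>z. (norm (f z))\<^sup>2 + (norm (g z))\<^sup>2) summable_on UNIV"
    using assms unfolding square_summable_def by (rule summable_on_add)
  have "norm a * norm b \<le> (norm a)\<^sup>2 + (norm b)\<^sup>2" for a b :: complex
    using sum_squares_bound[of "norm a" "norm b"] mult_nonneg_nonneg[OF norm_ge_zero norm_ge_zero, of a b]
    by linarith
  then show "(\<lambda>z. norm (f z * g z)) summable_on UNIV"
    by (intro summable_on_comparison_test[OF sum]) (simp_all add: norm_mult)
qed

lemma square_summable_delta: "square_summable (\<lambda>z. if z = z0 then e else 0)"
  unfolding square_summable_def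
  by (rule summable_on_cong_neutral[where S="{z0}", THEN iffD1]) auto

definition lattice_pairing :: "('a \<Rightarrow> complex) \<Rightarrow> ('a \<Rightarrow> complex) \<Rightarrow> complex" where
  "lattice_pairing f g = (\<Sum>\<^sub>\<infinity>z. f z * g z)"

lemma lattice_pairing_add_left:
  assumes "square_summable f" "square_summable g" "square_summable h"
  shows "lattice_pairing (\<lambda>z. f z + g z) h = lattice_pairing f h + lattice_pairing g h"
  unfolding lattice_pairing_def distrib_right
  by (intro infsum_add summable_on_mult_square_summable assms)

lemma lattice_pairing_add_right:
  assumes "square_summable f" "square_summable g" "square_summable h"
  shows "lattice_pairing f (\<lambda>z. g z + h z) = lattice_pairing f g + lattice_pairing f h"
  unfolding lattice_pairing_def distrib_left
  by (intro infsum_add summable_on_mult_square_summable assms)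

lemma lattice_pairing_cmult_left:
  assumes "square_summable f" "square_summable g"
  shows "lattice_pairing (\<lambda>z. c * f z) g = c * lattice_pairing f g"
  unfolding lattice_pairing_def mult.assoc
  by (intro infsum_cmult_right summable_on_mult_square_summable assms)

lemma lattice_pairing_cmult_right:
  assumes "square_summable f" "square_summable g"
  shows "lattice_pairing f (\<lambda>z. c * g z) = c * lattice_pairing f g"
  unfolding lattice_pairing_def mult.left_commute[of _ c]
  by (intro infsum_cmult_right summable_on_mult_square_summable assms)

lemma lattice_pairing_reindex:
  "bij g \<Longrightarrow> lattice_pairing (\<lambda>z. f (g z)) (\<lambda>z. h (g z)) = lattice_pairing f h"
  unfolding lattice_pairing_def by (rule infsum_reindex_bij_betw)

lemma lattice_pairing_space_shift:
  fixes f g :: "int \<times> int \<Rightarrow> complex"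
  shows "lattice_pairing (\<lambda>(x, t). f (x + j, t)) g = lattice_pairing f (\<lambda>(x, t). g (x - j, t))"
proof -
  have "bij (\<lambda>(x, t). (x - j, t :: int))"
    by (rule bij_betw_byWitness[where f'="\<lambda>(x, t). (x + j, t)"]) auto
  from lattice_pairing_reindex[OF this, of "\<lambda>(x, t). f (x + j, t)" g] show ?thesis
    by (simp add: split_beta')
qed

lemma lattice_pairing_delta:
  "lattice_pairing f (\<lambda>z. if z = z0 then e else 0) = f z0 * e"
proof -
  have "lattice_pairing f (\<lambda>z. if z = z0 then e else 0) = (\<Sum>\<^sub>\<infinity>z\<in>{z0}. f z * e)"
    unfolding lattice_pairing_def by (rule infsum_cong_neutral) auto
  then show ?thesis
    by simp
qed

lemma lattice_pairing_trig_shift: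
  assumes f: "square_summable f" and g: "square_summable g"
  shows "lattice_pairing (trig_shift c f) g = lattice_pairing f (trig_shift (trig_reflect c) g)"
proof (cases c)
  case (Trig a b c')
  define fp fm gp gm where "fp = (\<lambda>(x, t). f (x + 1, t))" and "fm = (\<lambda>(x, t). f (x + - 1, t))"
    and "gp = (\<lambda>(x, t). g (x + 1, t))" and "gm = (\<lambda>(x, t). g (x + - 1, t))"
  have shifted: "square_summable fp" "square_summable fm" "square_summable gp" "square_summable gm"
    unfolding fp_def fm_def gp_def gm_def
    using square_summable_space_shift[OF f, of 1] square_summable_space_shift[OF f, of "- 1"]
      square_summable_space_shift[OF g, of 1] square_summable_space_shift[OF g, of "- 1"] by simp_all
  have "trig_shift c f = (\<lambda>z. a * f z + b * fp z + c' * fm z)"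
    by (rule ext, case_tac z) (simp add: Trig fp_def fm_def)
  then have "lattice_pairing (trig_shift c f) g =
      a * lattice_pairing f g + b * lattice_pairing fp g + c' * lattice_pairing fm g"
    using f g shifted
    by (simp only: lattice_pairing_add_left lattice_pairing_cmult_left square_summable_add square_summable_cmult)
  also have "lattice_pairing fp g = lattice_pairing f gm"
    unfolding fp_def gm_def lattice_pairing_space_shift by simp
  also have "lattice_pairing fm g = lattice_pairing f gp"
    unfolding fm_def gp_def lattice_pairing_space_shift by simp
  also have "a * lattice_pairing f g + b * lattice_pairing f gm + c' * lattice_pairing f gp =
      lattice_pairing f (\<lambda>z. a * g z + c' * gp z + b * gm z)"
    using f g shifted
    by (simp only: lattice_pairing_add_right lattice_pairing_cmult_right square_summable_add square_summable_cmult)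
      (simp add: algebra_simps)
  also have "(\<lambda>z. a * g z + c' * gp z + b * gm z) = trig_shift (trig_reflect c) g"
    by (rule ext, case_tac z) (simp add: Trig gp_def gm_def)
  finally show ?thesis .
qed

lemma lattice_pairing_transpose:
  assumes "square_summable \<psi>1" "square_summable \<psi>2" "square_summable \<phi>1" "square_summable \<phi>2"
  shows "lattice_pairing (\<lambda>z. trig_shift m11 \<psi>1 z + trig_shift m12 \<psi>2 z) \<phi>1
      + lattice_pairing (\<lambda>z. trig_shift m21 \<psi>1 z + trig_shift m22 \<psi>2 z) \<phi>2
    = lattice_pairing \<psi>1 (\<lambda>z. trig_shift (trig_reflect m11) \<phi>1 z + trig_shift (trig_reflect m21) \<phi>2 z)
      + lattice_pairing \<psi>2 (\<lambda>z. trig_shift (trig_reflect m12) \<phi>1 z + trig_shift (trig_reflect m22) \<phi>2 z)"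
  using assms
  by (simp add: lattice_pairing_add_left lattice_pairing_add_right lattice_pairing_trig_shift square_summable_trig_shift)

(* Summation by parts in x (lattice_pairing_transpose) and a shift by one time step show that the
   pairing of \<psi> with \<phi> over the whole lattice equals itself minus the contribution of the
   point source of \<phi>, which is therefore 0. *)
lemma evolution_duality:
  fixes \<psi>1 \<psi>2 \<phi>1 \<phi>2 :: "int \<times> int \<Rightarrow> complex"
  assumes \<psi>1: "\<And>x t. \<psi>1 (x, t + 1) = trig_shift m11 \<psi>1 (x, t) + trig_shift m12 \<psi>2 (x, t)"
    and \<psi>2: "\<And>x t. \<psi>2 (x, t + 1) = trig_shift m21 \<psi>1 (x, t) + trig_shift m22 \<psi>2 (x, t)"
    and \<phi>1: "\<And>x t. \<phi>1 (x, t) = trig_shift (trig_reflect m11) \<phi>1 (x, t + 1)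
                      + trig_shift (trig_reflect m21) \<phi>2 (x, t + 1) + (if (x, t) = (0, 0) then e1 else 0)"
    and \<phi>2: "\<And>x t. \<phi>2 (x, t) = trig_shift (trig_reflect m12) \<phi>1 (x, t + 1)
                      + trig_shift (trig_reflect m22) \<phi>2 (x, t + 1) + (if (x, t) = (0, 0) then e2 else 0)"
    and square_summable: "square_summable \<psi>1" "square_summable \<psi>2" "square_summable \<phi>1" "square_summable \<phi>2"
  shows "\<psi>1 (0, 0) * e1 + \<psi>2 (0, 0) * e2 = 0"
proof -
  define step :: "int \<times> int \<Rightarrow> int \<times> int" where "step = (\<lambda>(x, t). (x, t + 1))"
  have "bij step"
    unfolding step_def by (rule bij_betw_byWitness[where f'="\<lambda>(x, t). (x, t - 1)"]) auto
  define \<phi>1' \<phi>2' where "\<phi>1' = (\<lambda>z. \<phi>1 (step z))" and "\<phi>2' = (\<lambda>z. \<phi>2 (step z))"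
  have ss: "square_summable \<phi>1'" "square_summable \<phi>2'"
    unfolding \<phi>1'_def \<phi>2'_def using \<open>bij step\<close> square_summable
    by (auto intro: square_summable_reindex bij_is_inj)
  define \<chi>1 \<chi>2 where
    "\<chi>1 = (\<lambda>z. trig_shift (trig_reflect m11) \<phi>1' z + trig_shift (trig_reflect m21) \<phi>2' z)" and
    "\<chi>2 = (\<lambda>z. trig_shift (trig_reflect m12) \<phi>1' z + trig_shift (trig_reflect m22) \<phi>2' z)"
  have shift_step: "trig_shift c (\<lambda>z. h (step z)) (x, t) = trig_shift c h (x, t + 1)" for c h x t
    by (cases c) (simp add: step_def)
  have "(\<lambda>z. \<psi>1 (step z)) = (\<lambda>z. trig_shift m11 \<psi>1 z + trig_shift m12 \<psi>2 z)"
       "(\<lambda>z. \<psi>2 (step z)) = (\<lambda>z. trig_shift m21 \<psi>1 z + trig_shift m22 \<psi>2 z)"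
    by (rule ext, case_tac z, simp add: step_def \<psi>1 \<psi>2)+
  then have "lattice_pairing \<psi>1 \<phi>1 + lattice_pairing \<psi>2 \<phi>2 =
      lattice_pairing (\<lambda>z. trig_shift m11 \<psi>1 z + trig_shift m12 \<psi>2 z) \<phi>1' +
      lattice_pairing (\<lambda>z. trig_shift m21 \<psi>1 z + trig_shift m22 \<psi>2 z) \<phi>2'"
    using lattice_pairing_reindex[OF \<open>bij step\<close>, of \<psi>1 \<phi>1] lattice_pairing_reindex[OF \<open>bij step\<close>, of \<psi>2 \<phi>2]
    by (simp add: \<phi>1'_def \<phi>2'_def)
  also have "\<dots> = lattice_pairing \<psi>1 \<chi>1 + lattice_pairing \<psi>2 \<chi>2"
    unfolding \<chi>1_def \<chi>2_def using square_summable(1,2) ss by (rule lattice_pairing_transpose)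
  finally have "lattice_pairing \<psi>1 \<phi>1 + lattice_pairing \<psi>2 \<phi>2 = lattice_pairing \<psi>1 \<chi>1 + lattice_pairing \<psi>2 \<chi>2" .
  moreover have "\<phi>1 = (\<lambda>z. \<chi>1 z + (if z = (0, 0) then e1 else 0))" "\<phi>2 = (\<lambda>z. \<chi>2 z + (if z = (0, 0) then e2 else 0))"
    by (rule ext, case_tac z, use \<phi>1 \<phi>2 in \<open>simp add: \<chi>1_def \<chi>2_def \<phi>1'_def \<phi>2'_def shift_step\<close>)+
  moreover have "square_summable \<chi>1" "square_summable \<chi>2"
    unfolding \<chi>1_def \<chi>2_def using ss by (auto intro!: square_summable_add square_summable_trig_shift)
  ultimately show ?thesis
    using square_summable by (simp add: lattice_pairing_add_right lattice_pairing_delta square_summable_delta)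
qed

lemma sum_power_abs_le:
  assumes "finite T" "0 \<le> (r::real)" "r < 1"
  shows "(\<Sum>t\<in>T. r ^ nat \<bar>t\<bar>) \<le> 2 / (1 - r)"
proof -
  have geometric: "(\<Sum>n\<in>N. r ^ n) \<le> 1 / (1 - r)" if "finite N" for N
  proof -
    have "(\<Sum>n\<in>N. r ^ n) \<le> (\<Sum>n. r ^ n)"
      using that assms by (intro sum_le_suminf summable_geometric) auto
    also have "\<dots> = 1 / (1 - r)"
      using suminf_geometric[of r] assms by simp
    finally show ?thesis .
  qed
  let ?P = "T \<inter> {0..}" and ?N = "T \<inter> {..<0}"
  have "(\<Sum>t\<in>T. r ^ nat \<bar>t\<bar>) = (\<Sum>t\<in>?P. r ^ nat \<bar>t\<bar>) + (\<Sum>t\<in>?N. r ^ nat \<bar>t\<bar>)"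
    using assms by (subst sum.union_disjoint[symmetric]) (auto intro: sum.cong)
  also have "(\<Sum>t\<in>?P. r ^ nat \<bar>t\<bar>) = (\<Sum>n\<in>nat ` ?P. r ^ n)"
    by (subst sum.reindex) (auto simp: inj_on_def intro!: sum.cong)
  also have "(\<Sum>t\<in>?N. r ^ nat \<bar>t\<bar>) = (\<Sum>n\<in>(\<lambda>t. nat (- t)) ` ?N. r ^ n)"
    by (subst sum.reindex) (auto simp: inj_on_def intro!: sum.cong)
  finally show ?thesis
    using geometric[of "nat ` ?P"] geometric[of "(\<lambda>t. nat (- t)) ` ?N"] assms by simp
qed

lemma square_summable_fourier_coeff:
  assumes cont: "\<And>t. continuous_on {-pi..pi} (g t)"
    and decay: "\<And>t p. p \<in> {-pi..pi} \<Longrightarrow> norm (g t p) \<le> C * \<rho> ^ nat \<bar>t\<bar>"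
    and \<rho>: "0 \<le> \<rho>" "\<rho> < 1"
  shows "square_summable (\<lambda>(x, t). fourier_coeff (g t) x)"
proof -
  have slice: "(\<Sum>x\<in>X. (norm (fourier_coeff (g t) x))\<^sup>2) \<le> C\<^sup>2 * (\<rho>\<^sup>2) ^ nat \<bar>t\<bar>" if "finite X" for X t
  proof -
    have "integral {-pi..pi} (\<lambda>p. (norm (g t p))\<^sup>2) \<le> integral {-pi..pi} (\<lambda>p. (C * \<rho> ^ nat \<bar>t\<bar>)\<^sup>2)"
      using decay by (intro integral_le integrable_continuous_interval continuous_intros cont power_mono) auto
    then have "integral {-pi..pi} (\<lambda>p. (norm (g t p))\<^sup>2) / (2 * pi) \<le> (C * \<rho> ^ nat \<bar>t\<bar>)\<^sup>2"
      by (simp add: field_simps)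
    from order_trans[OF bessel_inequality[OF cont that] this] show ?thesis
      by (simp add: power_mult_distrib power_mult[symmetric] mult.commute)
  qed
  have "(\<lambda>(x, t). (norm (fourier_coeff (g t) x))\<^sup>2) summable_on UNIV"
  proof (rule nonneg_bdd_above_summable_on)
    show "bdd_above (sum (\<lambda>(x, t). (norm (fourier_coeff (g t) x))\<^sup>2) ` {F. F \<subseteq> UNIV \<and> finite F})"
    proof (rule bdd_aboveI2)
      fix F :: "(int \<times> int) set"
      assume "F \<in> {F. F \<subseteq> UNIV \<and> finite F}"
      then have F: "finite F" "F \<subseteq> fst ` F \<times> snd ` F"
        by force+
      have "sum (\<lambda>(x, t). (norm (fourier_coeff (g t) x))\<^sup>2) F
          \<le> sum (\<lambda>(x, t). (norm (fourier_coeff (g t) x))\<^sup>2) (fst ` F \<times> snd ` F)"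
        using F by (intro sum_mono2) auto
      also have "\<dots> = (\<Sum>t\<in>snd ` F. \<Sum>x\<in>fst ` F. (norm (fourier_coeff (g t) x))\<^sup>2)"
        by (simp add: sum.cartesian_product[symmetric] sum.swap[of _ "snd ` F"])
      also have "\<dots> \<le> (\<Sum>t\<in>snd ` F. C\<^sup>2 * (\<rho>\<^sup>2) ^ nat \<bar>t\<bar>)"
        using F by (intro sum_mono slice) auto
      also have "\<dots> \<le> C\<^sup>2 * (2 / (1 - \<rho>\<^sup>2))"
        unfolding sum_distrib_left[symmetric] using F \<rho>
        by (intro mult_left_mono sum_power_abs_le) (auto simp: power_less_one_iff)
      finally show "sum (\<lambda>(x, t). (norm (fourier_coeff (g t) x))\<^sup>2) F \<le> C\<^sup>2 * (2 / (1 - \<rho>\<^sup>2))" .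
    qed
  qed auto
  then show ?thesis
    by (simp add: square_summable_def split_beta')
qed

section \<open>The two-sided Green function of a unimodular 2x2 matrix\<close>

(* The branch of the square root with cut along the negative imaginary axis: it is continuous on
   the closed upper half-plane minus 0 and maps the open upper half-plane into the open first
   quadrant.  Thus disc_root \<tau> is a continuous choice of sqrt (\<tau>\<^sup>2 - 4) for Im \<tau> \<ge> 0,
   \<tau> \<noteq> \<plusminus>2, and eig_s, eig_u are the roots of \<lambda>\<^sup>2 - \<tau> \<lambda> + 1, with |eig_s| < 1 when Im \<tau> > 0. *)
definition uhp_sqrt :: "complex \<Rightarrow> complex" where
  "uhp_sqrt w = (1 + \<i>) / sqrt 2 * csqrt (- \<i> * w)"

definition disc_root :: "complex \<Rightarrow> complex" where
  "disc_root \<tau> = uhp_sqrt (\<tau> - 2) * uhp_sqrt (\<tau> + 2)"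

definition eig_s :: "complex \<Rightarrow> complex" where
  "eig_s \<tau> = (\<tau> - disc_root \<tau>) / 2"

definition eig_u :: "complex \<Rightarrow> complex" where
  "eig_u \<tau> = (\<tau> + disc_root \<tau>) / 2"

lemma eighth_root_of_unity_square: "((1 + \<i>) / sqrt 2)\<^sup>2 = \<i>"
proof -
  have "(complex_of_real (sqrt 2))\<^sup>2 = 2"
    by (simp flip: of_real_power)
  then show ?thesis
    by (simp add: power_divide power2_eq_square algebra_simps)
qed

lemma uhp_sqrt_square: "(uhp_sqrt w)\<^sup>2 = w"
  unfolding uhp_sqrt_def power_mult_distrib eighth_root_of_unity_square by simp

lemma disc_root_square: "(disc_root \<tau>)\<^sup>2 = \<tau>\<^sup>2 - 4"
  unfolding disc_root_def power_mult_distrib uhp_sqrt_square by (simp add: algebra_simps power2_eq_square)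

lemma eig_s_mult_eig_u: "eig_s \<tau> * eig_u \<tau> = 1"
proof -
  have "eig_s \<tau> * eig_u \<tau> = (\<tau>\<^sup>2 - (disc_root \<tau>)\<^sup>2) / 4"
    unfolding eig_s_def eig_u_def by (simp add: power2_eq_square algebra_simps)
  then show ?thesis
    by (simp add: disc_root_square)
qed

lemma eig_s_add_eig_u: "eig_s \<tau> + eig_u \<tau> = \<tau>"
  unfolding eig_s_def eig_u_def by (simp add: field_simps)

lemma uhp_sqrt_first_quadrant:
  assumes "Im w > 0"
  shows "Re (uhp_sqrt w) > 0" "Im (uhp_sqrt w) > 0"
proof -
  define s where "s = csqrt (- \<i> * w)"
  have "s\<^sup>2 = - \<i> * w"
    by (simp add: s_def)
  then have "Re (s\<^sup>2) = Im w"
    by simp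
  then have "(Re s)\<^sup>2 - (Im s)\<^sup>2 = Im w"
    by (simp add: power2_eq_square)
  then have "(Re s - Im s) * (Re s + Im s) > 0"
    using assms by (simp add: power2_eq_square algebra_simps)
  moreover have "Re s \<ge> 0"
    unfolding s_def by (rule Re_csqrt)
  ultimately have "Re s - Im s > 0" "Re s + Im s > 0"
    by (smt (verit) mult_nonneg_nonpos mult_nonpos_nonneg)+
  moreover have "uhp_sqrt w = complex_of_real (1 / sqrt 2) * Complex (Re s - Im s) (Re s + Im s)"
    unfolding uhp_sqrt_def s_def[symmetric] by (simp add: complex_eq_iff)
  ultimately show "Re (uhp_sqrt w) > 0" "Im (uhp_sqrt w) > 0"
    by simp_all
qed

lemma norm_eig_s_less_1:
  assumes "Im \<tau> > 0"
  shows "norm (eig_s \<tau>) < 1"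
proof -
  define A B where "A = uhp_sqrt (\<tau> - 2)" and "B = uhp_sqrt (\<tau> + 2)"
  have A: "Re A > 0" "Im A > 0" and B: "Re B > 0" "Im B > 0"
    unfolding A_def B_def using assms by (auto intro!: uhp_sqrt_first_quadrant)
  have \<tau>: "\<tau> = (A\<^sup>2 + B\<^sup>2) / 2"
    by (simp add: A_def B_def uhp_sqrt_square field_simps)
  have s: "eig_s \<tau> = (A - B)\<^sup>2 / 4"
    unfolding eig_s_def disc_root_def A_def[symmetric] B_def[symmetric]
    by (subst (1) \<tau>) (simp add: field_simps power2_eq_square)
  have u: "eig_u \<tau> = (A + B)\<^sup>2 / 4"
    unfolding eig_u_def disc_root_def A_def[symmetric] B_def[symmetric]
    by (subst (1) \<tau>) (simp add: field_simps power2_eq_square)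
  have "(norm (A - B))\<^sup>2 < (norm (A + B))\<^sup>2"
  proof -
    have "0 < Re A * Re B" "0 < Im A * Im B"
      using A B by simp_all
    then show ?thesis
      by (simp add: cmod_power2 power2_sum power2_diff)
  qed
  then have "norm (eig_s \<tau>) < norm (eig_u \<tau>)"
    unfolding s u by (simp add: norm_divide norm_power)
  moreover have "norm (eig_s \<tau>) * norm (eig_u \<tau>) = 1"
    using eig_s_mult_eig_u[of \<tau>] by (metis norm_mult norm_one)
  ultimately have "(norm (eig_s \<tau>))\<^sup>2 < 1"
    by (cases "eig_s \<tau> = 0") (auto simp: power2_eq_square dest: mult_strict_left_mono[of _ _ "norm (eig_s \<tau>)"])
  then show ?thesis
    by (simp add: abs_square_less_1)
qed

lemma continuous_on_uhp_sqrt: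
  assumes "continuous_on S g" "\<And>z. z \<in> S \<Longrightarrow> Im (g z) \<ge> 0 \<and> g z \<noteq> 0"
  shows "continuous_on S (\<lambda>z. uhp_sqrt (g z))"
proof -
  have "- \<i> * g z \<notin> \<real>\<^sub>\<le>\<^sub>0" if "z \<in> S" for z
    using assms(2)[OF that] by (auto simp: complex_nonpos_Reals_iff complex_eq_iff)
  then have "continuous_on S (\<lambda>z. csqrt (- \<i> * g z))"
    by (intro continuous_on_compose2[OF continuous_on_csqrt, where f="\<lambda>z. - \<i> * g z"])
      (auto intro!: continuous_intros assms(1))
  then show ?thesis
    unfolding uhp_sqrt_def by (intro continuous_intros)
qed

lemma continuous_on_disc_root:
  assumes "continuous_on S g" "\<And>z. z \<in> S \<Longrightarrow> Im (g z) \<ge> 0 \<and> g z \<noteq> 2 \<and> g z \<noteq> -2"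
  shows "continuous_on S (\<lambda>z. disc_root (g z))"
  unfolding disc_root_def using assms
  by (intro continuous_intros continuous_on_uhp_sqrt)
    (auto simp: add_eq_0_iff equation_minus_iff minus_equation_iff)

lemma disc_root_of_real:
  assumes "-2 < r" "r < 2"
  shows "disc_root (complex_of_real r) = \<i> * sqrt (4 - r\<^sup>2)"
proof -
  define w where "w = (1 + \<i>) / sqrt 2"
  have "w\<^sup>2 = \<i>"
    unfolding w_def by (rule eighth_root_of_unity_square)
  then have w2: "w\<^sup>2 = \<i>" "(cnj w)\<^sup>2 = - \<i>"
    using arg_cong[of "w\<^sup>2" \<i> cnj] by (simp_all flip: complex_cnj_power)
  have "(complex_of_real (sqrt 2))\<^sup>2 = 2"
    by (simp flip: of_real_power)
  then have w_cnj: "w * cnj w = 1"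
    by (simp add: w_def power2_eq_square complex_eq_iff)
  have sq: "(complex_of_real (sqrt u))\<^sup>2 = u" if "u \<ge> 0" for u
    using that by (simp flip: of_real_power)
  have "csqrt (- \<i> * (r - 2)) = sqrt (2 - r) * w"
  proof (rule csqrt_unique)
    show "(complex_of_real (sqrt (2 - r)) * w)\<^sup>2 = - \<i> * (r - 2)"
      using assms by (simp add: power_mult_distrib w2 sq algebra_simps)
  qed (use assms in \<open>simp add: w_def\<close>)
  moreover have "csqrt (- \<i> * (r + 2)) = sqrt (2 + r) * cnj w"
  proof (rule csqrt_unique)
    show "(complex_of_real (sqrt (2 + r)) * cnj w)\<^sup>2 = - \<i> * (r + 2)"
      using assms by (simp add: power_mult_distrib w2 sq algebra_simps)
  qed (use assms in \<open>simp add: w_def\<close>)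
  moreover have "sqrt (2 - r) * sqrt (2 + r) = sqrt (4 - r\<^sup>2)"
    by (simp add: real_sqrt_mult[symmetric] power2_eq_square algebra_simps)
  ultimately have "disc_root r = (w * w) * (w * cnj w) * sqrt (4 - r\<^sup>2)"
    unfolding disc_root_def uhp_sqrt_def w_def[symmetric] by (simp add: mult_ac flip: of_real_mult)
  then show ?thesis
    using w2 w_cnj by (simp add: power2_eq_square)
qed

lemma disc_root_nonzero: "\<tau> \<noteq> 2 \<Longrightarrow> \<tau> \<noteq> -2 \<Longrightarrow> disc_root \<tau> \<noteq> 0"
  using disc_root_square[of \<tau>]
  by (auto simp: power2_eq_square algebra_simps add_eq_0_iff square_eq_iff[of \<tau> 2, simplified])

(* For M = [[a, b], [c, d]] with det M = 1, the components of e = (e1, e2) along the eigenvectors: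
   (eig_u - M) e / (eig_u - eig_s) and (M - eig_s) e / (eig_u - eig_s). *)
definition proj_s1 :: "complex \<Rightarrow> complex \<Rightarrow> complex \<Rightarrow> complex \<Rightarrow> complex \<Rightarrow> complex \<Rightarrow> complex" where
  "proj_s1 a b c d e1 e2 = ((eig_u (a + d) - a) * e1 - b * e2) / disc_root (a + d)"

definition proj_s2 :: "complex \<Rightarrow> complex \<Rightarrow> complex \<Rightarrow> complex \<Rightarrow> complex \<Rightarrow> complex \<Rightarrow> complex" where
  "proj_s2 a b c d e1 e2 = (- c * e1 + (eig_u (a + d) - d) * e2) / disc_root (a + d)"

definition proj_u1 :: "complex \<Rightarrow> complex \<Rightarrow> complex \<Rightarrow> complex \<Rightarrow> complex \<Rightarrow> complex \<Rightarrow> complex" where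
  "proj_u1 a b c d e1 e2 = ((a - eig_s (a + d)) * e1 + b * e2) / disc_root (a + d)"

definition proj_u2 :: "complex \<Rightarrow> complex \<Rightarrow> complex \<Rightarrow> complex \<Rightarrow> complex \<Rightarrow> complex \<Rightarrow> complex" where
  "proj_u2 a b c d e1 e2 = (c * e1 + (d - eig_s (a + d)) * e2) / disc_root (a + d)"

(* The solution of v (t + 1) = M v t + [t = -1] e that decays in both directions when |eig_s| < 1:
   eig_s^t P_s e for t \<ge> 0 and -eig_u^t P_u e = -eig_s^(-t) P_u e for t < 0. *)
definition green1 :: "complex \<Rightarrow> complex \<Rightarrow> complex \<Rightarrow> complex \<Rightarrow> complex \<Rightarrow> complex \<Rightarrow> int \<Rightarrow> complex" where
  "green1 a b c d e1 e2 t = (if 0 \<le> t then eig_s (a + d) ^ nat t * proj_s1 a b c d e1 e2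
     else - (eig_s (a + d) ^ nat (- t) * proj_u1 a b c d e1 e2))"

definition green2 :: "complex \<Rightarrow> complex \<Rightarrow> complex \<Rightarrow> complex \<Rightarrow> complex \<Rightarrow> complex \<Rightarrow> int \<Rightarrow> complex" where
  "green2 a b c d e1 e2 t = (if 0 \<le> t then eig_s (a + d) ^ nat t * proj_s2 a b c d e1 e2
     else - (eig_s (a + d) ^ nat (- t) * proj_u2 a b c d e1 e2))"

lemma proj_eigenvectors:
  fixes e1 e2 :: complex
  assumes det: "a * d - b * c = 1" and disc: "disc_root (a + d) \<noteq> 0"
  defines "s1 \<equiv> proj_s1 a b c d e1 e2" and "s2 \<equiv> proj_s2 a b c d e1 e2"
    and "u1 \<equiv> proj_u1 a b c d e1 e2" and "u2 \<equiv> proj_u2 a b c d e1 e2"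
  shows "eig_s (a + d) * s1 = a * s1 + b * s2" "eig_s (a + d) * s2 = c * s1 + d * s2"
    and "eig_u (a + d) * u1 = a * u1 + b * u2" "eig_u (a + d) * u2 = c * u1 + d * u2"
    and "s1 + u1 = e1" "s2 + u2 = e2"
proof -
  define ls lu where "ls = eig_s (a + d)" and "lu = eig_u (a + d)"
  have lu: "lu = a + d - ls" and disc_eq: "disc_root (a + d) = lu - ls"
    using eig_s_add_eig_u[of "a + d"] by (auto simp: ls_def lu_def eig_s_def eig_u_def field_simps)
  have ls_quadratic: "ls * ls = (a + d) * ls - 1"
    using eig_s_mult_eig_u[of "a + d"] unfolding ls_def[symmetric] lu_def[symmetric] lu
    by (simp add: algebra_simps)
  note defs = s1_def s2_def u1_def u2_def proj_s1_def proj_s2_def proj_u1_def proj_u2_def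
    ls_def[symmetric] lu_def[symmetric]
  show "eig_s (a + d) * s1 = a * s1 + b * s2" "eig_s (a + d) * s2 = c * s1 + d * s2"
    and "eig_u (a + d) * u1 = a * u1 + b * u2" "eig_u (a + d) * u2 = c * u1 + d * u2"
    unfolding defs using disc by (simp_all add: field_simps, unfold lu) (use ls_quadratic det in algebra)+
  have "s1 + u1 = e1 * (lu - ls) / (lu - ls)" "s2 + u2 = e2 * (lu - ls) / (lu - ls)"
    unfolding defs disc_eq by (simp_all add: add_divide_distrib[symmetric] algebra_simps)
  then show "s1 + u1 = e1" "s2 + u2 = e2"
    using disc by (simp_all add: disc_eq)
qed

lemma two_sided_geometric_rec:
  fixes l l' s u s1 u1 s2 u2 p q e :: complex
  assumes inv: "l * l' = 1" and s: "l * s = p * s1 + q * s2" and u: "l' * u = p * u1 + q * u2"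
    and e: "s + u = e"
  shows "(if 0 \<le> t + 1 then l ^ nat (t + 1) * s else - (l ^ nat (- (t + 1)) * u)) =
      p * (if 0 \<le> t then l ^ nat t * s1 else - (l ^ nat (- t) * u1)) +
      q * (if 0 \<le> t then l ^ nat t * s2 else - (l ^ nat (- t) * u2)) + (if t = -1 then e else 0)"
proof (cases t rule: linorder_cases[of _ "-1"])
  case less
  define n where "n = nat (- (t + 1))"
  then have n: "nat (- (t + 1)) = n" "nat (- t) = Suc n"
    using less by simp_all
  have "p * (l ^ Suc n * u1) + q * (l ^ Suc n * u2) = l ^ Suc n * (p * u1 + q * u2)"
    by (simp add: algebra_simps)
  also have "\<dots> = l ^ n * (l * l') * u"
    by (simp add: u[symmetric] mult_ac)
  finally show ?thesis
    using less n inv by (simp add: algebra_simps)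
next
  case equal
  have "p * (l * u1) + q * (l * u2) = l * (p * u1 + q * u2)"
    by (simp add: algebra_simps)
  also have "\<dots> = l * l' * u"
    by (simp add: u[symmetric] mult_ac)
  finally show ?thesis
    using equal inv e by (simp add: algebra_simps)
next
  case greater
  then have "nat (t + 1) = Suc (nat t)"
    by simp
  moreover have "l ^ Suc (nat t) * s = l ^ nat t * (l * s)"
    by (simp add: mult_ac)
  moreover have "l ^ nat t * (p * s1 + q * s2) = p * (l ^ nat t * s1) + q * (l ^ nat t * s2)"
    by (simp add: algebra_simps)
  ultimately show ?thesis
    using greater by (simp add: s)
qed

lemma green_rec:
  assumes det: "a * d - b * c = 1" and disc: "disc_root (a + d) \<noteq> 0"
  shows "green1 a b c d e1 e2 (t + 1) = a * green1 a b c d e1 e2 t + b * green2 a b c d e1 e2 t + (if t = -1 then e1 else 0)"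
    and "green2 a b c d e1 e2 (t + 1) = c * green1 a b c d e1 e2 t + d * green2 a b c d e1 e2 t + (if t = -1 then e2 else 0)"
  using proj_eigenvectors[OF det disc, of e1 e2] eig_s_mult_eig_u[of "a + d"]
  unfolding green1_def green2_def by (blast intro: two_sided_geometric_rec)+

lemma continuous_on_eigs:
  fixes a d :: "'a::topological_space \<Rightarrow> complex"
  assumes cont: "continuous_on S a" "continuous_on S d"
    and trace: "\<And>z. z \<in> S \<Longrightarrow> Im (a z + d z) \<ge> 0 \<and> a z + d z \<noteq> 2 \<and> a z + d z \<noteq> -2"
  shows "continuous_on S (\<lambda>z. eig_s (a z + d z))" "continuous_on S (\<lambda>z. eig_u (a z + d z))"
proof -
  have disc: "continuous_on S (\<lambda>z. disc_root (a z + d z))"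
    using cont trace by (intro continuous_on_disc_root continuous_intros) auto
  show "continuous_on S (\<lambda>z. eig_s (a z + d z))" "continuous_on S (\<lambda>z. eig_u (a z + d z))"
    unfolding eig_s_def eig_u_def by (auto intro!: continuous_intros cont disc)
qed

lemma continuous_on_projs:
  fixes a b c d :: "'a::topological_space \<Rightarrow> complex"
  assumes cont: "continuous_on S a" "continuous_on S b" "continuous_on S c" "continuous_on S d"
    and trace: "\<And>z. z \<in> S \<Longrightarrow> Im (a z + d z) \<ge> 0 \<and> a z + d z \<noteq> 2 \<and> a z + d z \<noteq> -2"
  shows "continuous_on S (\<lambda>z. proj_s1 (a z) (b z) (c z) (d z) e1 e2)"
    and "continuous_on S (\<lambda>z. proj_s2 (a z) (b z) (c z) (d z) e1 e2)"
    and "continuous_on S (\<lambda>z. proj_u1 (a z) (b z) (c z) (d z) e1 e2)"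
    and "continuous_on S (\<lambda>z. proj_u2 (a z) (b z) (c z) (d z) e1 e2)"
proof -
  note eigs = continuous_on_eigs[OF cont(1,4) trace]
  have disc: "continuous_on S (\<lambda>z. disc_root (a z + d z))"
    using cont trace by (intro continuous_on_disc_root continuous_intros) auto
  have nonzero: "\<forall>z\<in>S. disc_root (a z + d z) \<noteq> 0"
    using trace disc_root_nonzero by blast
  show "continuous_on S (\<lambda>z. proj_s1 (a z) (b z) (c z) (d z) e1 e2)"
    unfolding proj_s1_def by (intro continuous_intros cont disc nonzero eigs)
  show "continuous_on S (\<lambda>z. proj_s2 (a z) (b z) (c z) (d z) e1 e2)"
    unfolding proj_s2_def by (intro continuous_intros cont disc nonzero eigs)
  show "continuous_on S (\<lambda>z. proj_u1 (a z) (b z) (c z) (d z) e1 e2)"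
    unfolding proj_u1_def by (intro continuous_intros cont disc nonzero eigs)
  show "continuous_on S (\<lambda>z. proj_u2 (a z) (b z) (c z) (d z) e1 e2)"
    unfolding proj_u2_def by (intro continuous_intros cont disc nonzero eigs)
qed

lemma continuous_on_green:
  fixes a b c d :: "'a::topological_space \<Rightarrow> complex"
  assumes "continuous_on S a" "continuous_on S b" "continuous_on S c" "continuous_on S d"
    and "\<And>z. z \<in> S \<Longrightarrow> Im (a z + d z) \<ge> 0 \<and> a z + d z \<noteq> 2 \<and> a z + d z \<noteq> -2"
  shows "continuous_on S (\<lambda>z. green1 (a z) (b z) (c z) (d z) e1 e2 t)"
    and "continuous_on S (\<lambda>z. green2 (a z) (b z) (c z) (d z) e1 e2 t)"
proof -
  note parts = continuous_on_eigs[OF assms(1,4,5)] continuous_on_projs[OF assms, of e1 e2]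
  show "continuous_on S (\<lambda>z. green1 (a z) (b z) (c z) (d z) e1 e2 t)"
    unfolding green1_def using parts by (cases "0 \<le> t") (auto intro!: continuous_intros)
  show "continuous_on S (\<lambda>z. green2 (a z) (b z) (c z) (d z) e1 e2 t)"
    unfolding green2_def using parts by (cases "0 \<le> t") (auto intro!: continuous_intros)
qed

lemma green_decay:
  fixes a b c d :: "real \<Rightarrow> complex"
  assumes cont: "continuous_on {-pi..pi} a" "continuous_on {-pi..pi} b" "continuous_on {-pi..pi} c" "continuous_on {-pi..pi} d"
    and trace: "\<And>p. p \<in> {-pi..pi} \<Longrightarrow> Im (a p + d p) > 0"
  obtains C \<rho> where "0 \<le> \<rho>" "\<rho> < 1"
    and "\<And>t p. p \<in> {-pi..pi} \<Longrightarrow> norm (green1 (a p) (b p) (c p) (d p) e1 e2 t) \<le> C * \<rho> ^ nat \<bar>t\<bar>"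
    and "\<And>t p. p \<in> {-pi..pi} \<Longrightarrow> norm (green2 (a p) (b p) (c p) (d p) e1 e2 t) \<le> C * \<rho> ^ nat \<bar>t\<bar>"
proof -
  have "\<And>p. p \<in> {-pi..pi} \<Longrightarrow> Im (a p + d p) \<ge> 0 \<and> a p + d p \<noteq> 2 \<and> a p + d p \<noteq> -2"
    using trace by fastforce
  note eigs = continuous_on_eigs[OF cont(1,4) this] and projs = continuous_on_projs[OF cont this, of e1 e2]
  define r where "r p = norm (eig_s (a p + d p))" for p
  define M where "M p = norm (proj_s1 (a p) (b p) (c p) (d p) e1 e2) + norm (proj_s2 (a p) (b p) (c p) (d p) e1 e2)
     + norm (proj_u1 (a p) (b p) (c p) (d p) e1 e2) + norm (proj_u2 (a p) (b p) (c p) (d p) e1 e2)" for p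
  obtain p0 where p0: "p0 \<in> {-pi..pi}" "\<And>p. p \<in> {-pi..pi} \<Longrightarrow> r p \<le> r p0"
    using continuous_attains_sup[OF compact_Icc _ continuous_on_norm[OF eigs(1)]] unfolding r_def by fastforce
  obtain p1 where "\<And>p. p \<in> {-pi..pi} \<Longrightarrow> M p \<le> M p1"
    using continuous_attains_sup[OF compact_Icc, of "-pi" pi M] projs unfolding M_def
    by (fastforce intro: continuous_intros)
  then have M: "norm (proj_s1 (a p) (b p) (c p) (d p) e1 e2) \<le> M p1" "norm (proj_s2 (a p) (b p) (c p) (d p) e1 e2) \<le> M p1"
    "norm (proj_u1 (a p) (b p) (c p) (d p) e1 e2) \<le> M p1" "norm (proj_u2 (a p) (b p) (c p) (d p) e1 e2) \<le> M p1"
    if "p \<in> {-pi..pi}" for p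
    using that unfolding M_def by (smt (verit) norm_ge_zero)+
  have bound: "norm (eig_s (a p + d p) ^ n * y) \<le> M p1 * r p0 ^ n"
    if "p \<in> {-pi..pi}" "norm y \<le> M p1" for p n y
  proof -
    have "norm (eig_s (a p + d p) ^ n * y) = r p ^ n * norm y"
      by (simp add: r_def norm_mult norm_power)
    also have "\<dots> \<le> r p0 ^ n * M p1"
      using p0(2)[OF that(1)] that(2) by (intro mult_mono power_mono) (auto simp: r_def)
    finally show ?thesis
      by (simp add: mult.commute)
  qed
  show ?thesis
  proof
    show "0 \<le> r p0" "r p0 < 1"
      using norm_eig_s_less_1 trace[OF p0(1)] by (auto simp: r_def)
    show "norm (green1 (a p) (b p) (c p) (d p) e1 e2 t) \<le> M p1 * r p0 ^ nat \<bar>t\<bar>"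
      and "norm (green2 (a p) (b p) (c p) (d p) e1 e2 t) \<le> M p1 * r p0 ^ nat \<bar>t\<bar>"
      if "p \<in> {-pi..pi}" for t p
      using bound[OF that M(1)[OF that]] bound[OF that M(2)[OF that]] bound[OF that M(3)[OF that]]
        bound[OF that M(4)[OF that]]
      unfolding green1_def green2_def by simp_all
  qed
qed

section \<open>Lattice Green functions of a transfer symbol\<close>

locale transfer_symbol =
  fixes m11 m12 m21 m22 :: trig_poly
  assumes det_symbol: "\<And>p. trig_eval m11 p * trig_eval m22 p - trig_eval m12 p * trig_eval m21 p = 1"
    and trace_symbol: "\<And>p. Im (trig_eval m11 p + trig_eval m22 p) > 0"
begin

definition lattice_green1 :: "complex \<Rightarrow> complex \<Rightarrow> int \<times> int \<Rightarrow> complex" where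
  "lattice_green1 e1 e2 = (\<lambda>(x, t). fourier_coeff
     (\<lambda>p. green1 (trig_eval m11 p) (trig_eval m12 p) (trig_eval m21 p) (trig_eval m22 p) e1 e2 t) x)"

definition lattice_green2 :: "complex \<Rightarrow> complex \<Rightarrow> int \<times> int \<Rightarrow> complex" where
  "lattice_green2 e1 e2 = (\<lambda>(x, t). fourier_coeff
     (\<lambda>p. green2 (trig_eval m11 p) (trig_eval m12 p) (trig_eval m21 p) (trig_eval m22 p) e1 e2 t) x)"

lemma trace_symbol_admissible:
  "Im (trig_eval m11 p + trig_eval m22 p) \<ge> 0 \<and> trig_eval m11 p + trig_eval m22 p \<noteq> 2
     \<and> trig_eval m11 p + trig_eval m22 p \<noteq> -2"
proof -
  define \<tau> where "\<tau> = trig_eval m11 p + trig_eval m22 p"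
  have "Im \<tau> > 0"
    using trace_symbol[of p] by (simp add: \<tau>_def)
  then show ?thesis
    unfolding \<tau>_def[symmetric] by auto
qed

lemma continuous_on_green_symbol:
  "continuous_on S (\<lambda>p. green1 (trig_eval m11 p) (trig_eval m12 p) (trig_eval m21 p) (trig_eval m22 p) e1 e2 t)"
  "continuous_on S (\<lambda>p. green2 (trig_eval m11 p) (trig_eval m12 p) (trig_eval m21 p) (trig_eval m22 p) e1 e2 t)"
  by (intro continuous_on_green continuous_intros trace_symbol_admissible)+

lemma lattice_green_rec:
  "lattice_green1 e1 e2 (x, t + 1) = trig_shift m11 (lattice_green1 e1 e2) (x, t)
     + trig_shift m12 (lattice_green2 e1 e2) (x, t) + (if (x, t + 1) = (0, 0) then e1 else 0)"
  "lattice_green2 e1 e2 (x, t + 1) = trig_shift m21 (lattice_green1 e1 e2) (x, t)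
     + trig_shift m22 (lattice_green2 e1 e2) (x, t) + (if (x, t + 1) = (0, 0) then e2 else 0)"
proof -
  define g1 g2 where
    "g1 t p = green1 (trig_eval m11 p) (trig_eval m12 p) (trig_eval m21 p) (trig_eval m22 p) e1 e2 t" and
    "g2 t p = green2 (trig_eval m11 p) (trig_eval m12 p) (trig_eval m21 p) (trig_eval m22 p) e1 e2 t"
    for t p
  have cont: "continuous_on {-pi..pi} (g1 t)" "continuous_on {-pi..pi} (g2 t)" for t
    unfolding g1_def g2_def by (rule continuous_on_green_symbol)+
  have disc: "disc_root (trig_eval m11 p + trig_eval m22 p) \<noteq> 0" for p
    using trace_symbol_admissible[of p] disc_root_nonzero by blast
  note rec = green_rec[OF det_symbol disc, of _ e1 e2 t, folded g1_def g2_def]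
  have source: "fourier_coeff (\<lambda>p. if t = -1 then e else 0) x = (if (x, t + 1) = (0, 0) then e else 0)" for e
    by (simp add: fourier_coeff_const)
  have step: "fourier_coeff (\<lambda>p. trig_eval mi1 p * g1 t p + trig_eval mi2 p * g2 t p + (if t = -1 then e else 0)) x
      = trig_shift mi1 (\<lambda>(x, t). fourier_coeff (g1 t) x) (x, t) + trig_shift mi2 (\<lambda>(x, t). fourier_coeff (g2 t) x) (x, t)
        + (if (x, t + 1) = (0, 0) then e else 0)" for mi1 mi2 e
    using cont by (simp add: fourier_coeff_add fourier_coeff_trig_mult source continuous_intros)
  have "g1 (t + 1) = (\<lambda>p. trig_eval m11 p * g1 t p + trig_eval m12 p * g2 t p + (if t = -1 then e1 else 0))"
    "g2 (t + 1) = (\<lambda>p. trig_eval m21 p * g1 t p + trig_eval m22 p * g2 t p + (if t = -1 then e2 else 0))"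
    using rec by auto
  then show "lattice_green1 e1 e2 (x, t + 1) = trig_shift m11 (lattice_green1 e1 e2) (x, t)
     + trig_shift m12 (lattice_green2 e1 e2) (x, t) + (if (x, t + 1) = (0, 0) then e1 else 0)"
    and "lattice_green2 e1 e2 (x, t + 1) = trig_shift m21 (lattice_green1 e1 e2) (x, t)
     + trig_shift m22 (lattice_green2 e1 e2) (x, t) + (if (x, t + 1) = (0, 0) then e2 else 0)"
    unfolding lattice_green1_def lattice_green2_def g1_def[symmetric] g2_def[symmetric]
    by (simp_all add: step)
qed

lemma square_summable_lattice_green:
  "square_summable (lattice_green1 e1 e2)" "square_summable (lattice_green2 e1 e2)"
proof -
  have cont: "continuous_on {-pi..pi} (trig_eval m)" for m
    using continuous_on_trig_eval[OF continuous_on_id] by simp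
  have trace: "\<And>p. p \<in> {-pi..pi} \<Longrightarrow> Im (trig_eval m11 p + trig_eval m22 p) > 0"
    using trace_symbol by blast
  have "square_summable (lattice_green1 e1 e2) \<and> square_summable (lattice_green2 e1 e2)"
  proof (rule green_decay[of "trig_eval m11" "trig_eval m12" "trig_eval m21" "trig_eval m22" e1 e2,
        OF cont cont cont cont trace])
    fix C \<rho> :: real
    assume \<rho>: "0 \<le> \<rho>" "\<rho> < 1"
      and decay: "\<And>t p. p \<in> {-pi..pi} \<Longrightarrow>
        norm (green1 (trig_eval m11 p) (trig_eval m12 p) (trig_eval m21 p) (trig_eval m22 p) e1 e2 t) \<le> C * \<rho> ^ nat \<bar>t\<bar>"
        "\<And>t p. p \<in> {-pi..pi} \<Longrightarrow>
        norm (green2 (trig_eval m11 p) (trig_eval m12 p) (trig_eval m21 p) (trig_eval m22 p) e1 e2 t) \<le> C * \<rho> ^ nat \<bar>t\<bar>"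
    show ?thesis
      unfolding lattice_green1_def lattice_green2_def
      using square_summable_fourier_coeff[OF continuous_on_green_symbol(1) decay(1) \<rho>]
        square_summable_fourier_coeff[OF continuous_on_green_symbol(2) decay(2) \<rho>] by blast
  qed
  then show "square_summable (lattice_green1 e1 e2)" "square_summable (lattice_green2 e1 e2)"
    by auto
qed

lemma lattice_green_backward:
  "lattice_green1 e1 e2 (x, - t) = trig_shift m11 (lattice_green1 e1 e2) (x, - (t + 1))
     + trig_shift m12 (lattice_green2 e1 e2) (x, - (t + 1)) + (if (x, t) = (0, 0) then e1 else 0)"
  "lattice_green2 e1 e2 (x, - t) = trig_shift m21 (lattice_green1 e1 e2) (x, - (t + 1))
     + trig_shift m22 (lattice_green2 e1 e2) (x, - (t + 1)) + (if (x, t) = (0, 0) then e2 else 0)"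
  using lattice_green_rec[of e1 e2 x "- (t + 1)"] by simp_all

lemma homogeneous_solution_eq_0:
  assumes \<psi>1: "\<And>x t. \<psi>1 (x, t + 1) = trig_shift m11 \<psi>1 (x, t) + trig_shift m12 \<psi>2 (x, t)"
    and \<psi>2: "\<And>x t. \<psi>2 (x, t + 1) = trig_shift m21 \<psi>1 (x, t) + trig_shift m22 \<psi>2 (x, t)"
    and square_summable: "square_summable \<psi>1" "square_summable \<psi>2"
  shows "\<psi>1 z = 0 \<and> \<psi>2 z = 0"
proof -
  interpret adjoint: transfer_symbol "trig_reflect m11" "trig_reflect m21" "trig_reflect m12" "trig_reflect m22"
    using det_symbol trace_symbol by unfold_locales (simp_all add: trig_eval_reflect mult.commute)
  obtain x0 t0 where z: "z = (x0, t0)"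
    by fastforce
  define \<psi>1' \<psi>2' where "\<psi>1' = (\<lambda>(x, t). \<psi>1 (x + x0, t + t0))" and "\<psi>2' = (\<lambda>(x, t). \<psi>2 (x + x0, t + t0))"
  have \<psi>': "\<psi>1' (x, t + 1) = trig_shift m11 \<psi>1' (x, t) + trig_shift m12 \<psi>2' (x, t)"
    "\<psi>2' (x, t + 1) = trig_shift m21 \<psi>1' (x, t) + trig_shift m22 \<psi>2' (x, t)" for x t
    unfolding \<psi>1'_def \<psi>2'_def trig_shift_translate using \<psi>1[of "x + x0" "t + t0"] \<psi>2[of "x + x0" "t + t0"]
    by (simp_all add: ac_simps)
  have inj_translate: "inj (\<lambda>(x, t). (x + x0, t + t0 :: int))"
    by (auto simp: inj_on_def)
  have ss_\<psi>': "square_summable \<psi>1'" "square_summable \<psi>2'"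
    unfolding \<psi>1'_def \<psi>2'_def
    using square_summable_reindex[OF square_summable(1) inj_translate]
      square_summable_reindex[OF square_summable(2) inj_translate]
    by (simp_all add: split_beta')
  have inj_reflect: "inj (\<lambda>(x, t). (x, - t :: int))"
    by (auto simp: inj_on_def)
  have pairing: "\<psi>1' (0, 0) * e1 + \<psi>2' (0, 0) * e2 = 0" for e1 e2
  proof (rule evolution_duality[OF \<psi>'])
    define \<phi>1 \<phi>2 where "\<phi>1 = (\<lambda>(x, t). adjoint.lattice_green1 e1 e2 (x, - t))"
      and "\<phi>2 = (\<lambda>(x, t). adjoint.lattice_green2 e1 e2 (x, - t))"
    show "\<phi>1 (x, t) = trig_shift (trig_reflect m11) \<phi>1 (x, t + 1)
        + trig_shift (trig_reflect m21) \<phi>2 (x, t + 1) + (if (x, t) = (0, 0) then e1 else 0)"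
      and "\<phi>2 (x, t) = trig_shift (trig_reflect m12) \<phi>1 (x, t + 1)
        + trig_shift (trig_reflect m22) \<phi>2 (x, t + 1) + (if (x, t) = (0, 0) then e2 else 0)" for x t
      unfolding \<phi>1_def \<phi>2_def trig_shift_time_reflect
      by (simp_all only: case_prod_conv adjoint.lattice_green_backward)
    show "square_summable \<phi>1" "square_summable \<phi>2"
      unfolding \<phi>1_def \<phi>2_def
      using square_summable_reindex[OF adjoint.square_summable_lattice_green(1) inj_reflect]
        square_summable_reindex[OF adjoint.square_summable_lattice_green(2) inj_reflect]
      by (simp_all add: split_beta')
  qed (use ss_\<psi>' in auto)
  from pairing[of 1 0] pairing[of 0 1] show ?thesis
    by (simp add: z \<psi>1'_def \<psi>2'_def)
qed

end

section \<open>The checkers transfer symbol\<close>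

(* With \<mu> = m \<epsilon>: after eliminating the odd points by rule (2), rule (1) becomes a step
   (a, s) \<mapsto> (a, s + 1) on the even sublattice (\<epsilon> a, \<epsilon> s) whose symbol has these entries. *)
definition transfer_scale :: "real \<Rightarrow> real \<Rightarrow> real" where
  "transfer_scale \<mu> \<delta> = 1 / (sqrt (1 + \<mu>\<^sup>2) * sqrt (1 - \<delta>\<^sup>2))"

definition transfer11 :: "real \<Rightarrow> real \<Rightarrow> trig_poly" where
  "transfer11 \<mu> \<delta> = Trig (transfer_scale \<mu> \<delta> * \<i> * \<mu> * \<delta>) (transfer_scale \<mu> \<delta>) 0"

definition transfer12 :: "real \<Rightarrow> real \<Rightarrow> trig_poly" where
  "transfer12 \<mu> \<delta> = Trig (transfer_scale \<mu> \<delta> * \<mu>) (- transfer_scale \<mu> \<delta> * \<i> * \<delta>) 0"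

definition transfer21 :: "real \<Rightarrow> real \<Rightarrow> trig_poly" where
  "transfer21 \<mu> \<delta> = Trig (- transfer_scale \<mu> \<delta> * \<mu>) 0 (transfer_scale \<mu> \<delta> * \<i> * \<delta>)"

definition transfer22 :: "real \<Rightarrow> real \<Rightarrow> trig_poly" where
  "transfer22 \<mu> \<delta> = Trig (transfer_scale \<mu> \<delta> * \<i> * \<mu> * \<delta>) 0 (transfer_scale \<mu> \<delta>)"

lemma transfer_det:
  assumes "\<bar>\<delta>\<bar> < 1"
  shows "trig_eval (transfer11 \<mu> \<delta>) p * trig_eval (transfer22 \<mu> \<delta>) p
       - trig_eval (transfer12 \<mu> \<delta>) p * trig_eval (transfer21 \<mu> \<delta>) p = 1"
proof -
  define K where "K = complex_of_real (transfer_scale \<mu> \<delta>)"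
  have "1 - \<delta>\<^sup>2 > 0" "1 + \<mu>\<^sup>2 > 0"
    using assms by (simp_all add: abs_square_less_1 add_pos_nonneg)
  then have "(transfer_scale \<mu> \<delta>)\<^sup>2 * ((1 + \<mu>\<^sup>2) * (1 - \<delta>\<^sup>2)) = 1"
    unfolding transfer_scale_def by (simp add: power_divide power_mult_distrib)
  from arg_cong[OF this, of complex_of_real]
  have "K\<^sup>2 * ((1 + (complex_of_real \<mu>)\<^sup>2) * (1 - (complex_of_real \<delta>)\<^sup>2)) = 1"
    unfolding K_def by simp
  moreover have "trig_eval (transfer11 \<mu> \<delta>) p * trig_eval (transfer22 \<mu> \<delta>) p
       - trig_eval (transfer12 \<mu> \<delta>) p * trig_eval (transfer21 \<mu> \<delta>) p
     = K\<^sup>2 * ((cis p * cis (- p)) * (1 - (complex_of_real \<delta>)\<^sup>2) + (complex_of_real \<mu>)\<^sup>2 * (1 - (complex_of_real \<delta>)\<^sup>2))"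
    unfolding transfer11_def transfer12_def transfer21_def transfer22_def trig_eval.simps K_def
    by (simp add: algebra_simps power2_eq_square)
  moreover have "cis p * cis (- p) = 1"
    by (simp add: cis_mult)
  ultimately show ?thesis
    by (simp add: algebra_simps)
qed

lemma transfer_trace:
  "trig_eval (transfer11 \<mu> \<delta>) p + trig_eval (transfer22 \<mu> \<delta>) p
     = complex_of_real (2 * transfer_scale \<mu> \<delta> * cos p) + \<i> * (2 * transfer_scale \<mu> \<delta> * \<mu> * \<delta>)"
  unfolding transfer11_def transfer22_def by (simp add: complex_eq_iff)

lemma transfer_scale_pos: "\<bar>\<delta>\<bar> < 1 \<Longrightarrow> transfer_scale \<mu> \<delta> > 0"
  unfolding transfer_scale_def by (simp add: abs_square_less_1 add_pos_nonneg)

lemma transfer_trace_admissible: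
  fixes p :: real
  assumes "\<mu> > 0" "0 \<le> \<delta>" "\<delta> < 1"
  defines "\<tau> \<equiv> trig_eval (transfer11 \<mu> \<delta>) p + trig_eval (transfer22 \<mu> \<delta>) p"
  shows "Im \<tau> \<ge> 0 \<and> \<tau> \<noteq> 2 \<and> \<tau> \<noteq> -2"
proof (cases "\<delta> = 0")
  case True
  define c where "c = transfer_scale \<mu> 0 * cos p"
  have "transfer_scale \<mu> 0 < 1"
    using assms(1) by (simp add: transfer_scale_def add_pos_nonneg)
  moreover have "transfer_scale \<mu> 0 * \<bar>cos p\<bar> \<le> transfer_scale \<mu> 0"
    using transfer_scale_pos[of 0 \<mu>] by (intro mult_left_le) auto
  ultimately have "transfer_scale \<mu> 0 * \<bar>cos p\<bar> < 1"
    by linarith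
  then have "\<bar>c\<bar> < 1"
    using transfer_scale_pos[of 0 \<mu>] by (simp add: c_def abs_mult)
  moreover have "\<tau> = complex_of_real (2 * c)"
    unfolding \<tau>_def transfer_trace True c_def by simp
  ultimately show ?thesis
    by (auto simp: complex_eq_iff)
next
  case False
  then have "Im \<tau> > 0"
    using assms transfer_scale_pos[of \<delta> \<mu>] unfolding \<tau>_def transfer_trace by simp
  then show ?thesis
    by auto
qed

lemma transfer_symbol_checkers:
  assumes "\<mu> > 0" "0 < \<delta>" "\<delta> < 1"
  shows "transfer_symbol (transfer11 \<mu> \<delta>) (transfer12 \<mu> \<delta>) (transfer21 \<mu> \<delta>) (transfer22 \<mu> \<delta>)"
proof
  show "trig_eval (transfer11 \<mu> \<delta>) p * trig_eval (transfer22 \<mu> \<delta>) p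
      - trig_eval (transfer12 \<mu> \<delta>) p * trig_eval (transfer21 \<mu> \<delta>) p = 1" for p
    using assms by (intro transfer_det) simp
  show "Im (trig_eval (transfer11 \<mu> \<delta>) p + trig_eval (transfer22 \<mu> \<delta>) p) > 0" for p
    using assms transfer_scale_pos[of \<delta> \<mu>] unfolding transfer_trace by simp
qed

lemma continuous_on_transfer:
  "continuous_on ({0..<1} \<times> UNIV) (\<lambda>z. trig_eval (transfer11 \<mu> (fst z)) (snd z))"
  "continuous_on ({0..<1} \<times> UNIV) (\<lambda>z. trig_eval (transfer12 \<mu> (fst z)) (snd z))"
  "continuous_on ({0..<1} \<times> UNIV) (\<lambda>z. trig_eval (transfer21 \<mu> (fst z)) (snd z))"
  "continuous_on ({0..<1} \<times> UNIV) (\<lambda>z. trig_eval (transfer22 \<mu> (fst z)) (snd z))"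
proof -
  have square_ne: "x\<^sup>2 \<noteq> 1" if "0 \<le> x" "x < 1" for x :: real
    using that by (simp add: power_less_one_iff less_imp_neq)
  have "0 < 1 + \<mu>\<^sup>2"
    by (simp add: add_pos_nonneg)
  then have "continuous_on ({0..<1} \<times> UNIV) (\<lambda>z. complex_of_real (transfer_scale \<mu> (fst z)))"
    unfolding transfer_scale_def by (intro continuous_intros) (auto simp: square_ne)
  then show
    "continuous_on ({0..<1} \<times> UNIV) (\<lambda>z. trig_eval (transfer11 \<mu> (fst z)) (snd z))"
    "continuous_on ({0..<1} \<times> UNIV) (\<lambda>z. trig_eval (transfer12 \<mu> (fst z)) (snd z))"
    "continuous_on ({0..<1} \<times> UNIV) (\<lambda>z. trig_eval (transfer21 \<mu> (fst z)) (snd z))"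
    "continuous_on ({0..<1} \<times> UNIV) (\<lambda>z. trig_eval (transfer22 \<mu> (fst z)) (snd z))"
    unfolding transfer11_def transfer12_def transfer21_def transfer22_def trig_eval.simps
    by (auto intro!: continuous_intros)
qed

section \<open>Solutions on the half-integer lattice\<close>

lemma even_real_of_int [simp]: "even_real (of_int n) \<longleftrightarrow> even n"
  unfolding even_real_def by auto

lemma odd_real_of_int [simp]: "odd_real (of_int n) \<longleftrightarrow> odd n"
  unfolding odd_real_def by auto

lemma even_real_imp_not_odd_real: "even_real r \<Longrightarrow> \<not> odd_real r"
  unfolding even_real_def odd_real_def by auto

lemma lat_even_point:
  assumes "\<epsilon> > 0"
  shows "(\<epsilon> * of_int a, \<epsilon> * of_int s) \<in> lat \<epsilon> \<and>
    even_real (2 * (\<epsilon> * of_int a) / \<epsilon>) \<and> even_real (2 * (\<epsilon> * of_int s) / \<epsilon>)"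
proof -
  have "2 * (\<epsilon> * of_int a) / \<epsilon> = of_int (2 * a)" "2 * (\<epsilon> * of_int s) / \<epsilon> = of_int (2 * s)"
    "(\<epsilon> * of_int a + \<epsilon> * of_int s) / \<epsilon> = of_int (a + s)"
    using assms by (simp_all add: field_simps)
  then show ?thesis
    unfolding lat_def by (simp_all del: of_int_mult of_int_add)
qed

lemma lat_odd_point:
  assumes "\<epsilon> > 0"
  shows "(\<epsilon> * of_int a + \<epsilon> / 2, \<epsilon> * of_int s + \<epsilon> / 2) \<in> lat \<epsilon> \<and>
    odd_real (2 * (\<epsilon> * of_int a + \<epsilon> / 2) / \<epsilon>) \<and> odd_real (2 * (\<epsilon> * of_int s + \<epsilon> / 2) / \<epsilon>)"
proof -
  have "2 * (\<epsilon> * of_int a + \<epsilon> / 2) / \<epsilon> = of_int (2 * a + 1)" "2 * (\<epsilon> * of_int s + \<epsilon> / 2) / \<epsilon> = of_int (2 * s + 1)"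
    "(\<epsilon> * of_int a + \<epsilon> / 2 + (\<epsilon> * of_int s + \<epsilon> / 2)) / \<epsilon> = of_int (a + s + 1)"
    using assms by (simp_all add: field_simps)
  then show ?thesis
    unfolding lat_def by (simp_all del: of_int_mult of_int_add)
qed

lemma lat_cases:
  assumes "\<epsilon> > 0" "(x, t) \<in> lat \<epsilon>"
  obtains (even) a s where "x = \<epsilon> * of_int a" "t = \<epsilon> * of_int s"
    | (odd) a s where "x = \<epsilon> * of_int a + \<epsilon> / 2" "t = \<epsilon> * of_int s + \<epsilon> / 2"
proof -
  obtain n1 n2 n3 where n: "2 * x / \<epsilon> = of_int n1" "2 * t / \<epsilon> = of_int n2" "(x + t) / \<epsilon> = of_int n3"
    using assms(2) unfolding lat_def by (auto elim!: Ints_cases)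
  have "real_of_int (n1 + n2) = 2 * ((x + t) / \<epsilon>)"
    unfolding of_int_add n(1,2)[symmetric] by (simp add: add_divide_distrib algebra_simps)
  then have "n1 + n2 = 2 * n3"
    unfolding n(3) by (metis of_int_eq_iff of_int_mult of_int_numeral)
  then have "even n1 = even n2"
    by (metis even_add even_mult_iff even_numeral)
  moreover have x: "x = \<epsilon> * of_int n1 / 2" and t: "t = \<epsilon> * of_int n2 / 2"
    using n assms(1) by (simp_all add: field_simps)
  ultimately consider a s where "n1 = 2 * a" "n2 = 2 * s" | a s where "n1 = 2 * a + 1" "n2 = 2 * s + 1"
    by (metis evenE oddE)
  then show ?thesis
  proof cases
    case (1 a s)
    then show ?thesis
      by (intro even[of a s]) (simp_all add: x t)
  next
    case (2 a s)
    then show ?thesis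
      by (intro odd[of a s]) (simp_all add: x t field_simps)
  qed
qed

lemma lat_even_point_cases:
  assumes "\<epsilon> > 0" "(x, t) \<in> lat \<epsilon>" "even_real (2 * x / \<epsilon>)"
  obtains a s where "x = \<epsilon> * of_int a" "t = \<epsilon> * of_int s"
  using assms(1,2)
proof (cases rule: lat_cases)
  case (odd a s)
  then show ?thesis
    using assms(3) lat_odd_point[OF assms(1), of a s] even_real_imp_not_odd_real by blast
qed

lemma lat_odd_point_cases:
  assumes "\<epsilon> > 0" "(x, t) \<in> lat \<epsilon>" "odd_real (2 * x / \<epsilon>)"
  obtains a s where "x = \<epsilon> * of_int a + \<epsilon> / 2" "t = \<epsilon> * of_int s + \<epsilon> / 2"
  using assms(1,2)
proof (cases rule: lat_cases)
  case (even a s)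
  then show ?thesis
    using assms(3) lat_even_point[OF assms(1), of a s] even_real_imp_not_odd_real by blast
qed

definition even_part :: "real \<Rightarrow> (real \<Rightarrow> real \<Rightarrow> complex) \<Rightarrow> int \<times> int \<Rightarrow> complex" where
  "even_part \<epsilon> A = (\<lambda>(a, s). A (\<epsilon> * of_int a) (\<epsilon> * of_int s))"

definition checkers_rec :: "real \<Rightarrow> real \<Rightarrow> complex \<Rightarrow> (int \<times> int \<Rightarrow> complex) \<Rightarrow> (int \<times> int \<Rightarrow> complex) \<Rightarrow> bool" where
  "checkers_rec \<mu> \<delta> e v1 v2 \<longleftrightarrow> (\<forall>x t.
     v1 (x, t + 1) = trig_shift (transfer11 \<mu> \<delta>) v1 (x, t) + trig_shift (transfer12 \<mu> \<delta>) v2 (x, t) \<and>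
     v2 (x, t + 1) = trig_shift (transfer21 \<mu> \<delta>) v1 (x, t) + trig_shift (transfer22 \<mu> \<delta>) v2 (x, t)
       + (if (x, t + 1) = (0, 0) then e else 0))"

(* The inverse of even_part on solutions: the odd points are filled in by rule (2). *)
definition lattice_extension1 ::
  "real \<Rightarrow> real \<Rightarrow> (int \<times> int \<Rightarrow> complex) \<Rightarrow> (int \<times> int \<Rightarrow> complex) \<Rightarrow> real \<Rightarrow> real \<Rightarrow> complex" where
  "lattice_extension1 \<epsilon> \<delta> v1 v2 x t =
     (if (x, t) \<notin> lat \<epsilon> then 0
      else if even_real (2 * x / \<epsilon>) then v1 (\<lfloor>x / \<epsilon>\<rfloor>, \<lfloor>t / \<epsilon>\<rfloor>)
      else 1 / sqrt (1 - \<delta>\<^sup>2) * (v1 (\<lfloor>x / \<epsilon>\<rfloor> + 1, \<lfloor>t / \<epsilon>\<rfloor>) - \<i> * \<delta> * v2 (\<lfloor>x / \<epsilon>\<rfloor> + 1, \<lfloor>t / \<epsilon>\<rfloor>)))"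

definition lattice_extension2 ::
  "real \<Rightarrow> real \<Rightarrow> (int \<times> int \<Rightarrow> complex) \<Rightarrow> (int \<times> int \<Rightarrow> complex) \<Rightarrow> real \<Rightarrow> real \<Rightarrow> complex" where
  "lattice_extension2 \<epsilon> \<delta> v1 v2 x t =
     (if (x, t) \<notin> lat \<epsilon> then 0
      else if even_real (2 * x / \<epsilon>) then v2 (\<lfloor>x / \<epsilon>\<rfloor>, \<lfloor>t / \<epsilon>\<rfloor>)
      else 1 / sqrt (1 - \<delta>\<^sup>2) * (v2 (\<lfloor>x / \<epsilon>\<rfloor>, \<lfloor>t / \<epsilon>\<rfloor>) + \<i> * \<delta> * v1 (\<lfloor>x / \<epsilon>\<rfloor>, \<lfloor>t / \<epsilon>\<rfloor>)))"

lemma lattice_extension_even_point: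
  assumes "\<epsilon> > 0"
  shows "lattice_extension1 \<epsilon> \<delta> v1 v2 (\<epsilon> * of_int a) (\<epsilon> * of_int s) = v1 (a, s)"
    and "lattice_extension2 \<epsilon> \<delta> v1 v2 (\<epsilon> * of_int a) (\<epsilon> * of_int s) = v2 (a, s)"
  using lat_even_point[OF assms, of a s] assms
  by (simp_all add: lattice_extension1_def lattice_extension2_def)

lemma lattice_extension_odd_point:
  assumes "\<epsilon> > 0"
  shows "lattice_extension1 \<epsilon> \<delta> v1 v2 (\<epsilon> * of_int a + \<epsilon> / 2) (\<epsilon> * of_int s + \<epsilon> / 2)
      = 1 / sqrt (1 - \<delta>\<^sup>2) * (v1 (a + 1, s) - \<i> * \<delta> * v2 (a + 1, s))"
    and "lattice_extension2 \<epsilon> \<delta> v1 v2 (\<epsilon> * of_int a + \<epsilon> / 2) (\<epsilon> * of_int s + \<epsilon> / 2)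
      = 1 / sqrt (1 - \<delta>\<^sup>2) * (v2 (a, s) + \<i> * \<delta> * v1 (a, s))"
proof -
  have "\<lfloor>(\<epsilon> * of_int a + \<epsilon> / 2) / \<epsilon>\<rfloor> = a" "\<lfloor>(\<epsilon> * of_int s + \<epsilon> / 2) / \<epsilon>\<rfloor> = s"
    using assms by (simp_all add: add_divide_distrib floor_eq_iff)
  with lat_odd_point[OF assms, of a s] show
    "lattice_extension1 \<epsilon> \<delta> v1 v2 (\<epsilon> * of_int a + \<epsilon> / 2) (\<epsilon> * of_int s + \<epsilon> / 2)
      = 1 / sqrt (1 - \<delta>\<^sup>2) * (v1 (a + 1, s) - \<i> * \<delta> * v2 (a + 1, s))"
    "lattice_extension2 \<epsilon> \<delta> v1 v2 (\<epsilon> * of_int a + \<epsilon> / 2) (\<epsilon> * of_int s + \<epsilon> / 2)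
      = 1 / sqrt (1 - \<delta>\<^sup>2) * (v2 (a, s) + \<i> * \<delta> * v1 (a, s))"
    by (auto simp: lattice_extension1_def lattice_extension2_def dest: even_real_imp_not_odd_real)
qed

lemma is_sol_odd_point:
  assumes sol: "is_sol m \<epsilon> \<delta> A1 A2" and \<epsilon>: "\<epsilon> > 0"
  shows "A1 (\<epsilon> * of_int a + \<epsilon> / 2) (\<epsilon> * of_int s + \<epsilon> / 2)
      = 1 / sqrt (1 - \<delta>\<^sup>2) * (A1 (\<epsilon> * of_int (a + 1)) (\<epsilon> * of_int s) - \<i> * \<delta> * A2 (\<epsilon> * of_int (a + 1)) (\<epsilon> * of_int s))"
    and "A2 (\<epsilon> * of_int a + \<epsilon> / 2) (\<epsilon> * of_int s + \<epsilon> / 2)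
      = 1 / sqrt (1 - \<delta>\<^sup>2) * (A2 (\<epsilon> * of_int a) (\<epsilon> * of_int s) + \<i> * \<delta> * A1 (\<epsilon> * of_int a) (\<epsilon> * of_int s))"
proof -
  have odd_rule: "\<And>x t. (x, t) \<in> lat \<epsilon> \<and> odd_real (2 * x / \<epsilon>) \<and> odd_real (2 * t / \<epsilon>) \<Longrightarrow>
      A1 x t = 1 / sqrt (1 - \<delta>\<^sup>2) * (A1 (x + \<epsilon>/2) (t - \<epsilon>/2) - \<i> * \<delta> * A2 (x + \<epsilon>/2) (t - \<epsilon>/2)) \<and>
      A2 x t = 1 / sqrt (1 - \<delta>\<^sup>2) * (A2 (x - \<epsilon>/2) (t - \<epsilon>/2) + \<i> * \<delta> * A1 (x - \<epsilon>/2) (t - \<epsilon>/2))"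
    using sol unfolding is_sol_def by blast
  have "\<epsilon> * of_int a + \<epsilon> / 2 + \<epsilon> / 2 = \<epsilon> * of_int (a + 1)"
    by (simp add: field_simps)
  then show "A1 (\<epsilon> * of_int a + \<epsilon> / 2) (\<epsilon> * of_int s + \<epsilon> / 2)
      = 1 / sqrt (1 - \<delta>\<^sup>2) * (A1 (\<epsilon> * of_int (a + 1)) (\<epsilon> * of_int s) - \<i> * \<delta> * A2 (\<epsilon> * of_int (a + 1)) (\<epsilon> * of_int s))"
    and "A2 (\<epsilon> * of_int a + \<epsilon> / 2) (\<epsilon> * of_int s + \<epsilon> / 2)
      = 1 / sqrt (1 - \<delta>\<^sup>2) * (A2 (\<epsilon> * of_int a) (\<epsilon> * of_int s) + \<i> * \<delta> * A1 (\<epsilon> * of_int a) (\<epsilon> * of_int s))"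
    using odd_rule[OF lat_odd_point[OF \<epsilon>, of a s]] by simp_all
qed

lemma transfer_scale_factor: "transfer_scale (m * \<epsilon>) \<delta> = 1 / sqrt (1 + m\<^sup>2 * \<epsilon>\<^sup>2) * (1 / sqrt (1 - \<delta>\<^sup>2))"
  by (simp add: transfer_scale_def power_mult_distrib)

lemma is_sol_checkers_rec:
  assumes sol: "is_sol m \<epsilon> \<delta> A1 A2" and \<epsilon>: "\<epsilon> > 0"
  shows "checkers_rec (m * \<epsilon>) \<delta> 2 (even_part \<epsilon> A1) (even_part \<epsilon> A2)"
proof -
  have even_rule: "\<And>x t. (x, t) \<in> lat \<epsilon> \<and> even_real (2 * x / \<epsilon>) \<and> even_real (2 * t / \<epsilon>) \<Longrightarrow>
      A1 x t = 1 / sqrt (1 + m\<^sup>2 * \<epsilon>\<^sup>2) * (A1 (x + \<epsilon>/2) (t - \<epsilon>/2) + (m * \<epsilon>) * A2 (x + \<epsilon>/2) (t - \<epsilon>/2)) \<and>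
      A2 x t = 1 / sqrt (1 + m\<^sup>2 * \<epsilon>\<^sup>2) * (A2 (x - \<epsilon>/2) (t - \<epsilon>/2) - (m * \<epsilon>) * A1 (x - \<epsilon>/2) (t - \<epsilon>/2))
        + (if x = 0 \<and> t = 0 then 2 else 0)"
    using sol unfolding is_sol_def by blast
  show ?thesis
    unfolding checkers_rec_def
  proof (intro allI conjI)
    fix a s :: int
    have shift: "\<epsilon> * of_int (s + 1) - \<epsilon> / 2 = \<epsilon> * of_int s + \<epsilon> / 2"
      "\<epsilon> * of_int a - \<epsilon> / 2 = \<epsilon> * of_int (a - 1) + \<epsilon> / 2"
      by (simp_all add: field_simps)
    have origin: "(\<epsilon> * of_int a = 0 \<and> \<epsilon> * of_int (s + 1) = 0) \<longleftrightarrow> (a, s + 1) = (0, 0)"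
      using \<epsilon> by (simp del: of_int_add add: of_int_eq_0_iff)
    note rule = even_rule[OF lat_even_point[OF \<epsilon>, of a "s + 1"], unfolded shift origin]
    note odd = is_sol_odd_point[OF sol \<epsilon>, of a s] is_sol_odd_point[OF sol \<epsilon>, of "a - 1" s, unfolded diff_add_cancel]
    show "even_part \<epsilon> A1 (a, s + 1) = trig_shift (transfer11 (m * \<epsilon>) \<delta>) (even_part \<epsilon> A1) (a, s)
        + trig_shift (transfer12 (m * \<epsilon>) \<delta>) (even_part \<epsilon> A2) (a, s)"
      by (simp only: even_part_def case_prod_conv rule odd)
        (simp add: transfer11_def transfer12_def transfer_scale_factor algebra_simps)
    show "even_part \<epsilon> A2 (a, s + 1) = trig_shift (transfer21 (m * \<epsilon>) \<delta>) (even_part \<epsilon> A1) (a, s)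
        + trig_shift (transfer22 (m * \<epsilon>) \<delta>) (even_part \<epsilon> A2) (a, s) + (if (a, s + 1) = (0, 0) then 2 else 0)"
      by (simp only: even_part_def case_prod_conv rule odd)
        (simp add: transfer21_def transfer22_def transfer_scale_factor algebra_simps)
  qed
qed

lemma is_sol_square_summable:
  assumes "is_sol m \<epsilon> \<delta> A1 A2"
  shows "square_summable (even_part \<epsilon> A1)" "square_summable (even_part \<epsilon> A2)"
proof -
  have sum: "(\<lambda>(a::int, b::int). (cmod (A1 (\<epsilon> * of_int a) (\<epsilon> * of_int b)))\<^sup>2
      + (cmod (A2 (\<epsilon> * of_int a) (\<epsilon> * of_int b)))\<^sup>2) summable_on UNIV"
    using assms unfolding is_sol_def by blast
  show "square_summable (even_part \<epsilon> A1)" "square_summable (even_part \<epsilon> A2)"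
    unfolding square_summable_def even_part_def
    by (rule summable_on_comparison_test[OF sum]; simp add: split_beta)+
qed

lemma is_sol_eq_extension:
  assumes sol: "is_sol m \<epsilon> \<delta> A1 A2" and \<epsilon>: "\<epsilon> > 0"
  shows "A1 = lattice_extension1 \<epsilon> \<delta> (even_part \<epsilon> A1) (even_part \<epsilon> A2) \<and>
    A2 = lattice_extension2 \<epsilon> \<delta> (even_part \<epsilon> A1) (even_part \<epsilon> A2)"
proof -
  have "A1 x t = lattice_extension1 \<epsilon> \<delta> (even_part \<epsilon> A1) (even_part \<epsilon> A2) x t \<and>
      A2 x t = lattice_extension2 \<epsilon> \<delta> (even_part \<epsilon> A1) (even_part \<epsilon> A2) x t" for x t
  proof (cases "(x, t) \<in> lat \<epsilon>")
    case False
    then show ?thesis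
      using sol by (simp add: is_sol_def lattice_extension1_def lattice_extension2_def)
  next
    case True
    from \<epsilon> this show ?thesis
    proof (cases rule: lat_cases)
      case (even a s)
      then show ?thesis
        by (simp add: lattice_extension_even_point[OF \<epsilon>] even_part_def)
    next
      case (odd a s)
      then show ?thesis
        by (simp only: lattice_extension_odd_point[OF \<epsilon>] is_sol_odd_point[OF sol \<epsilon>] even_part_def case_prod_conv)
    qed
  qed
  then show ?thesis
    by auto
qed

lemma lattice_extension_even_step:
  assumes \<epsilon>: "\<epsilon> > 0" and rec: "checkers_rec (m * \<epsilon>) \<delta> 2 v1 v2"
    and even: "(x, t) \<in> lat \<epsilon>" "even_real (2 * x / \<epsilon>)"
  shows "lattice_extension1 \<epsilon> \<delta> v1 v2 x t = complex_of_real (1 / sqrt (1 + m\<^sup>2 * \<epsilon>\<^sup>2)) *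
      (lattice_extension1 \<epsilon> \<delta> v1 v2 (x + \<epsilon> / 2) (t - \<epsilon> / 2)
        + complex_of_real (m * \<epsilon>) * lattice_extension2 \<epsilon> \<delta> v1 v2 (x + \<epsilon> / 2) (t - \<epsilon> / 2)) \<and>
    lattice_extension2 \<epsilon> \<delta> v1 v2 x t = complex_of_real (1 / sqrt (1 + m\<^sup>2 * \<epsilon>\<^sup>2)) *
      (lattice_extension2 \<epsilon> \<delta> v1 v2 (x - \<epsilon> / 2) (t - \<epsilon> / 2)
        - complex_of_real (m * \<epsilon>) * lattice_extension1 \<epsilon> \<delta> v1 v2 (x - \<epsilon> / 2) (t - \<epsilon> / 2))
      + (if x = 0 \<and> t = 0 then 2 else 0)"
proof -
  obtain a s where xt: "x = \<epsilon> * of_int a" "t = \<epsilon> * of_int (s + 1)"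
  proof (rule lat_even_point_cases[OF \<epsilon> even])
    fix a s
    assume "x = \<epsilon> * of_int a" "t = \<epsilon> * of_int s"
    then show thesis
      using that[of a "s - 1"] by simp
  qed
  have shift: "\<epsilon> * of_int (s + 1) - \<epsilon> / 2 = \<epsilon> * of_int s + \<epsilon> / 2"
    "\<epsilon> * of_int a - \<epsilon> / 2 = \<epsilon> * of_int (a - 1) + \<epsilon> / 2"
    by (simp_all add: field_simps)
  have origin: "(\<epsilon> * of_int a = 0 \<and> \<epsilon> * of_int (s + 1) = 0) \<longleftrightarrow> (a, s + 1) = (0, 0)"
    using \<epsilon> by (simp del: of_int_add add: of_int_eq_0_iff)
  note ext = lattice_extension_even_point[OF \<epsilon>] lattice_extension_odd_point[OF \<epsilon>, of \<delta> v1 v2 a s]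
    lattice_extension_odd_point[OF \<epsilon>, of \<delta> v1 v2 "a - 1" s, unfolded diff_add_cancel]
  have rec1: "v1 (a, s + 1) = trig_shift (transfer11 (m * \<epsilon>) \<delta>) v1 (a, s) + trig_shift (transfer12 (m * \<epsilon>) \<delta>) v2 (a, s)"
    and rec2: "v2 (a, s + 1) = trig_shift (transfer21 (m * \<epsilon>) \<delta>) v1 (a, s) + trig_shift (transfer22 (m * \<epsilon>) \<delta>) v2 (a, s)
      + (if (a, s + 1) = (0, 0) then 2 else 0)"
    using rec unfolding checkers_rec_def by blast+
  show ?thesis
    unfolding xt shift origin ext rec1 rec2
    by (simp add: transfer11_def transfer12_def transfer21_def transfer22_def transfer_scale_factor algebra_simps)
qed

lemma lattice_extension_odd_step:
  assumes \<epsilon>: "\<epsilon> > 0" and odd: "(x, t) \<in> lat \<epsilon>" "odd_real (2 * x / \<epsilon>)"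
  shows "lattice_extension1 \<epsilon> \<delta> v1 v2 x t = complex_of_real (1 / sqrt (1 - \<delta>\<^sup>2)) *
      (lattice_extension1 \<epsilon> \<delta> v1 v2 (x + \<epsilon> / 2) (t - \<epsilon> / 2)
        - \<i> * complex_of_real \<delta> * lattice_extension2 \<epsilon> \<delta> v1 v2 (x + \<epsilon> / 2) (t - \<epsilon> / 2)) \<and>
    lattice_extension2 \<epsilon> \<delta> v1 v2 x t = complex_of_real (1 / sqrt (1 - \<delta>\<^sup>2)) *
      (lattice_extension2 \<epsilon> \<delta> v1 v2 (x - \<epsilon> / 2) (t - \<epsilon> / 2)
        + \<i> * complex_of_real \<delta> * lattice_extension1 \<epsilon> \<delta> v1 v2 (x - \<epsilon> / 2) (t - \<epsilon> / 2))"
proof -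
  obtain a s where xt: "x = \<epsilon> * of_int a + \<epsilon> / 2" "t = \<epsilon> * of_int s + \<epsilon> / 2"
    using lat_odd_point_cases[OF \<epsilon> odd] .
  have shift: "\<epsilon> * of_int a + \<epsilon> / 2 + \<epsilon> / 2 = \<epsilon> * of_int (a + 1)"
    "\<epsilon> * of_int a + \<epsilon> / 2 - \<epsilon> / 2 = \<epsilon> * of_int a" "\<epsilon> * of_int s + \<epsilon> / 2 - \<epsilon> / 2 = \<epsilon> * of_int s"
    by (simp_all add: field_simps)
  show ?thesis
    unfolding xt shift lattice_extension_odd_point[OF \<epsilon>] lattice_extension_even_point[OF \<epsilon>] by simp
qed

lemma is_sol_lattice_extension:
  assumes \<epsilon>: "\<epsilon> > 0" and rec: "checkers_rec (m * \<epsilon>) \<delta> 2 v1 v2"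
    and square_summable: "square_summable v1" "square_summable v2"
  shows "is_sol m \<epsilon> \<delta> (lattice_extension1 \<epsilon> \<delta> v1 v2) (lattice_extension2 \<epsilon> \<delta> v1 v2)"
proof -
  have "(\<lambda>z. (norm (v1 z))\<^sup>2 + (norm (v2 z))\<^sup>2) summable_on UNIV"
    using square_summable unfolding square_summable_def by (rule summable_on_add)
  then have summable: "(\<lambda>(a::int, b::int). (cmod (lattice_extension1 \<epsilon> \<delta> v1 v2 (\<epsilon> * of_int a) (\<epsilon> * of_int b)))\<^sup>2
      + (cmod (lattice_extension2 \<epsilon> \<delta> v1 v2 (\<epsilon> * of_int a) (\<epsilon> * of_int b)))\<^sup>2) summable_on UNIV"
    by (simp add: lattice_extension_even_point[OF \<epsilon>] split_beta')
  have off: "lattice_extension1 \<epsilon> \<delta> v1 v2 x t = 0 \<and> lattice_extension2 \<epsilon> \<delta> v1 v2 x t = 0"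
    if "(x, t) \<notin> lat \<epsilon>" for x t
    using that by (simp add: lattice_extension1_def lattice_extension2_def)
  note even = lattice_extension_even_step[OF \<epsilon> rec] and odd = lattice_extension_odd_step[OF \<epsilon>]
  show ?thesis
    unfolding is_sol_def
    by (intro conjI allI impI off[THEN conjunct1] off[THEN conjunct2] even[THEN conjunct1]
        even[THEN conjunct2] odd[THEN conjunct1] odd[THEN conjunct2] summable) auto
qed

lemma checkers_rec_diff:
  assumes "checkers_rec \<mu> \<delta> e v1 v2" "checkers_rec \<mu> \<delta> e w1 w2"
  shows "checkers_rec \<mu> \<delta> 0 (\<lambda>z. v1 z - w1 z) (\<lambda>z. v2 z - w2 z)"
  using assms unfolding checkers_rec_def trig_shift_diff by (simp add: algebra_simps)

lemma is_sol_unique: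
  assumes m: "m > 0" and \<epsilon>: "\<epsilon> > 0" and \<delta>: "0 < \<delta>" "\<delta> < 1"
    and A: "is_sol m \<epsilon> \<delta> A1 A2" and B: "is_sol m \<epsilon> \<delta> B1 B2"
  shows "A1 = B1 \<and> A2 = B2"
proof -
  interpret transfer_symbol "transfer11 (m * \<epsilon>) \<delta>" "transfer12 (m * \<epsilon>) \<delta>" "transfer21 (m * \<epsilon>) \<delta>" "transfer22 (m * \<epsilon>) \<delta>"
    using m \<epsilon> \<delta> by (intro transfer_symbol_checkers) simp_all
  define \<psi>1 \<psi>2 where "\<psi>1 = (\<lambda>z. even_part \<epsilon> A1 z - even_part \<epsilon> B1 z)"
    and "\<psi>2 = (\<lambda>z. even_part \<epsilon> A2 z - even_part \<epsilon> B2 z)"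
  have "checkers_rec (m * \<epsilon>) \<delta> 0 \<psi>1 \<psi>2"
    unfolding \<psi>1_def \<psi>2_def using is_sol_checkers_rec[OF A \<epsilon>] is_sol_checkers_rec[OF B \<epsilon>]
    by (rule checkers_rec_diff)
  moreover have "square_summable \<psi>1" "square_summable \<psi>2"
    unfolding \<psi>1_def \<psi>2_def using is_sol_square_summable[OF A] is_sol_square_summable[OF B]
    by (simp_all add: square_summable_diff)
  ultimately have "\<psi>1 z = 0 \<and> \<psi>2 z = 0" for z
    by (intro homogeneous_solution_eq_0) (simp_all add: checkers_rec_def)
  then have "even_part \<epsilon> A1 = even_part \<epsilon> B1" "even_part \<epsilon> A2 = even_part \<epsilon> B2"
    by (auto simp: \<psi>1_def \<psi>2_def)
  then show ?thesis
    using is_sol_eq_extension[OF A \<epsilon>] is_sol_eq_extension[OF B \<epsilon>] by simp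
qed

definition checkers_green1 :: "real \<Rightarrow> real \<Rightarrow> int \<Rightarrow> real \<Rightarrow> complex" where
  "checkers_green1 \<mu> \<delta> t p = green1 (trig_eval (transfer11 \<mu> \<delta>) p) (trig_eval (transfer12 \<mu> \<delta>) p)
     (trig_eval (transfer21 \<mu> \<delta>) p) (trig_eval (transfer22 \<mu> \<delta>) p) 0 2 t"

definition checkers_green2 :: "real \<Rightarrow> real \<Rightarrow> int \<Rightarrow> real \<Rightarrow> complex" where
  "checkers_green2 \<mu> \<delta> t p = green2 (trig_eval (transfer11 \<mu> \<delta>) p) (trig_eval (transfer12 \<mu> \<delta>) p)
     (trig_eval (transfer21 \<mu> \<delta>) p) (trig_eval (transfer22 \<mu> \<delta>) p) 0 2 t"

lemma A_sol_even_point: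
  assumes m: "m > 0" and \<epsilon>: "\<epsilon> > 0" and \<delta>: "0 < \<delta>" "\<delta> < 1"
  shows "fst (A_sol m \<epsilon> \<delta>) (\<epsilon> * of_int a) (\<epsilon> * of_int s) = fourier_coeff (checkers_green1 (m * \<epsilon>) \<delta> s) a"
    and "snd (A_sol m \<epsilon> \<delta>) (\<epsilon> * of_int a) (\<epsilon> * of_int s) = fourier_coeff (checkers_green2 (m * \<epsilon>) \<delta> s) a"
proof -
  interpret transfer_symbol "transfer11 (m * \<epsilon>) \<delta>" "transfer12 (m * \<epsilon>) \<delta>" "transfer21 (m * \<epsilon>) \<delta>" "transfer22 (m * \<epsilon>) \<delta>"
    using m \<epsilon> \<delta> by (intro transfer_symbol_checkers) simp_all
  define E1 E2 where "E1 = lattice_extension1 \<epsilon> \<delta> (lattice_green1 0 2) (lattice_green2 0 2)"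
    and "E2 = lattice_extension2 \<epsilon> \<delta> (lattice_green1 0 2) (lattice_green2 0 2)"
  have "checkers_rec (m * \<epsilon>) \<delta> 2 (lattice_green1 0 2) (lattice_green2 0 2)"
    unfolding checkers_rec_def using lattice_green_rec[of 0 2] by simp
  then have sol: "is_sol m \<epsilon> \<delta> E1 E2"
    unfolding E1_def E2_def using \<epsilon> square_summable_lattice_green by (intro is_sol_lattice_extension)
  have "A_sol m \<epsilon> \<delta> = (E1, E2)"
    unfolding A_sol_def
  proof (rule the_equality)
    show "is_sol m \<epsilon> \<delta> (fst (E1, E2)) (snd (E1, E2))"
      using sol by simp
    show "p = (E1, E2)" if "is_sol m \<epsilon> \<delta> (fst p) (snd p)" for p
      using is_sol_unique[OF m \<epsilon> \<delta> that sol] by (simp add: prod_eq_iff)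
  qed
  then show "fst (A_sol m \<epsilon> \<delta>) (\<epsilon> * of_int a) (\<epsilon> * of_int s) = fourier_coeff (checkers_green1 (m * \<epsilon>) \<delta> s) a"
    and "snd (A_sol m \<epsilon> \<delta>) (\<epsilon> * of_int a) (\<epsilon> * of_int s) = fourier_coeff (checkers_green2 (m * \<epsilon>) \<delta> s) a"
    by (simp_all add: E1_def E2_def lattice_extension_even_point[OF \<epsilon>] lattice_green1_def lattice_green2_def
        checkers_green1_def[abs_def] checkers_green2_def[abs_def])
qed

section \<open>The limit \<delta> \<rightarrow> 0\<close>

lemma continuous_on_checkers_green:
  assumes "\<mu> > 0"
  shows "continuous_on ({0..<1} \<times> UNIV) (\<lambda>z. checkers_green1 \<mu> (fst z) t (snd z))"
    and "continuous_on ({0..<1} \<times> UNIV) (\<lambda>z. checkers_green2 \<mu> (fst z) t (snd z))"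
  unfolding checkers_green1_def checkers_green2_def
  using assms transfer_trace_admissible
  by (auto intro!: continuous_on_green continuous_on_transfer)

lemma lattice_propagator_fourier_coeff:
  assumes m: "m > 0" and \<epsilon>: "\<epsilon> > 0"
  shows "A1t (\<epsilon> * of_int a) (\<epsilon> * of_int s) m \<epsilon> = fourier_coeff (checkers_green1 (m * \<epsilon>) 0 s) a"
    and "A2t (\<epsilon> * of_int a) (\<epsilon> * of_int s) m \<epsilon> = fourier_coeff (checkers_green2 (m * \<epsilon>) 0 s) a"
proof -
  have limit: "((\<lambda>\<delta>. fourier_coeff (g \<delta>) a) \<longlongrightarrow> fourier_coeff (g 0) a) (at_right 0)"
    if "continuous_on ({0..<1} \<times> UNIV) (\<lambda>z. g (fst z) (snd z))" for g :: "real \<Rightarrow> real \<Rightarrow> complex"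
  proof -
    have "continuous_on ({0..<1} \<times> {-pi..pi}) (\<lambda>(\<delta>, p). g \<delta> p)"
      using continuous_on_subset[OF that, of "{0..<1} \<times> {-pi..pi}"] by (auto simp: split_beta)
    then have "continuous_on {0..<1} (\<lambda>\<delta>. fourier_coeff (g \<delta>) a)"
      by (rule continuous_on_fourier_coeff)
    then have "continuous_on {0..1/2} (\<lambda>\<delta>. fourier_coeff (g \<delta>) a)"
      by (rule continuous_on_subset) auto
    then have "((\<lambda>\<delta>. fourier_coeff (g \<delta>) a) \<longlongrightarrow> fourier_coeff (g 0) a) (at 0 within {0..1/2})"
      by (simp add: continuous_on_def)
    then show ?thesis
      by (simp add: at_within_Icc_at_right)
  qed
  have eventually: "eventually (\<lambda>\<delta>. \<delta> \<in> {0<..<1}) (at_right (0::real))"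
    by (rule eventually_at_right_real) simp
  have "((\<lambda>\<delta>. fst (A_sol m \<epsilon> \<delta>) (\<epsilon> * of_int a) (\<epsilon> * of_int s)) \<longlongrightarrow> fourier_coeff (checkers_green1 (m * \<epsilon>) 0 s) a) (at_right 0)"
    using limit[OF continuous_on_checkers_green(1)] m \<epsilon>
    by (subst tendsto_cong[OF eventually_mono[OF eventually]]) (auto simp: A_sol_even_point)
  then show "A1t (\<epsilon> * of_int a) (\<epsilon> * of_int s) m \<epsilon> = fourier_coeff (checkers_green1 (m * \<epsilon>) 0 s) a"
    unfolding A1t_def by (rule tendsto_Lim[rotated]) simp
  have "((\<lambda>\<delta>. snd (A_sol m \<epsilon> \<delta>) (\<epsilon> * of_int a) (\<epsilon> * of_int s)) \<longlongrightarrow> fourier_coeff (checkers_green2 (m * \<epsilon>) 0 s) a) (at_right 0)"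
    using limit[OF continuous_on_checkers_green(2)] m \<epsilon>
    by (subst tendsto_cong[OF eventually_mono[OF eventually]]) (auto simp: A_sol_even_point)
  then show "A2t (\<epsilon> * of_int a) (\<epsilon> * of_int s) m \<epsilon> = fourier_coeff (checkers_green2 (m * \<epsilon>) 0 s) a"
    unfolding A2t_def by (rule tendsto_Lim[rotated]) simp
qed

(* For q = p \<epsilon>: free_frequency (m \<epsilon>) q = \<epsilon> \<omega>_p, and free_kernel1, free_kernel2 are the
   integrands of the theorem without the factor e^(i p x) and the constant prefactors. *)
definition free_frequency :: "real \<Rightarrow> real \<Rightarrow> real" where
  "free_frequency \<mu> q = arccos (cos q / sqrt (1 + \<mu>\<^sup>2))"

definition dispersion_norm :: "real \<Rightarrow> real \<Rightarrow> real" where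
  "dispersion_norm \<mu> q = sqrt (\<mu>\<^sup>2 + (sin q)\<^sup>2)"

definition free_kernel1 :: "real \<Rightarrow> int \<Rightarrow> real \<Rightarrow> complex" where
  "free_kernel1 \<mu> t q = cis (- (free_frequency \<mu> q * of_int t)) * (\<i> * (\<mu> / dispersion_norm \<mu> q))"

definition free_kernel2 :: "real \<Rightarrow> int \<Rightarrow> real \<Rightarrow> complex" where
  "free_kernel2 \<mu> t q = cis (- (free_frequency \<mu> q * of_int t)) * (1 + sin q / dispersion_norm \<mu> q)"

lemma sqrt_one_plus_square_pos: "sqrt (1 + \<mu>\<^sup>2) > 0"
  by (simp add: add_pos_nonneg)

lemma cos_over_sqrt_bounds: "-1 \<le> cos q / sqrt (1 + \<mu>\<^sup>2) \<and> cos q / sqrt (1 + \<mu>\<^sup>2) \<le> 1"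
proof -
  have "\<bar>cos q\<bar> \<le> sqrt (1 + \<mu>\<^sup>2)"
    using abs_cos_le_one[of q] by (rule order_trans) simp
  then have "\<bar>cos q / sqrt (1 + \<mu>\<^sup>2)\<bar> \<le> 1"
    using sqrt_one_plus_square_pos[of \<mu>] by (simp add: abs_divide)
  then show ?thesis
    by (simp only: abs_le_iff) auto
qed

lemma cos_free_frequency: "cos (free_frequency \<mu> q) = cos q / sqrt (1 + \<mu>\<^sup>2)"
  unfolding free_frequency_def using cos_over_sqrt_bounds[of q \<mu>] by (intro cos_arccos) auto

lemma sin_free_frequency: "sin (free_frequency \<mu> q) = dispersion_norm \<mu> q / sqrt (1 + \<mu>\<^sup>2)"
proof -
  have "sqrt (1 - (cos q / sqrt (1 + \<mu>\<^sup>2))\<^sup>2) = dispersion_norm \<mu> q / sqrt (1 + \<mu>\<^sup>2)"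
  proof (rule real_sqrt_unique)
    have "(sqrt (1 + \<mu>\<^sup>2))\<^sup>2 = 1 + \<mu>\<^sup>2" "(dispersion_norm \<mu> q)\<^sup>2 = \<mu>\<^sup>2 + (sin q)\<^sup>2"
      by (simp_all add: dispersion_norm_def add_nonneg_nonneg)
    then show "(dispersion_norm \<mu> q / sqrt (1 + \<mu>\<^sup>2))\<^sup>2 = 1 - (cos q / sqrt (1 + \<mu>\<^sup>2))\<^sup>2"
      using sqrt_one_plus_square_pos[of \<mu>] unfolding power_divide by (simp add: field_simps sin_squared_eq)
  qed (simp add: dispersion_norm_def)
  then show ?thesis
    unfolding free_frequency_def using cos_over_sqrt_bounds[of q \<mu>] by (simp only: sin_arccos)
qed

lemma free_frequency_shift_pi: "free_frequency \<mu> (q + pi) = pi - free_frequency \<mu> q"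
  unfolding free_frequency_def using cos_over_sqrt_bounds[of q \<mu>] by (simp add: arccos_minus)

lemma continuous_on_free_frequency: "continuous_on S (free_frequency \<mu>)"
  unfolding free_frequency_def using cos_over_sqrt_bounds sqrt_one_plus_square_pos[of \<mu>]
  by (intro continuous_intros) auto

lemma dispersion_norm_pos: "\<mu> > 0 \<Longrightarrow> dispersion_norm \<mu> q > 0"
  unfolding dispersion_norm_def by (simp add: add_pos_nonneg)

lemma free_transfer_spectrum:
  fixes q :: real
  assumes "\<mu> > 0"
  defines "\<tau> \<equiv> trig_eval (transfer11 \<mu> 0) q + trig_eval (transfer22 \<mu> 0) q"
    and "\<omega> \<equiv> free_frequency \<mu> q"
  shows "disc_root \<tau> = 2 * \<i> * sin \<omega>" "eig_s \<tau> = cis (- \<omega>)" "eig_u \<tau> = cis \<omega>"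
proof -
  have A: "sqrt (1 + \<mu>\<^sup>2) > 1"
    using assms(1) by simp
  have trace: "\<tau> = complex_of_real (2 * cos \<omega>)"
    by (simp add: \<tau>_def \<omega>_def cos_free_frequency transfer11_def transfer22_def transfer_scale_def
        complex_eq_iff add_divide_distrib[symmetric])
  have "\<bar>cos q\<bar> < sqrt (1 + \<mu>\<^sup>2)"
    using abs_cos_le_one[of q] A by linarith
  then have "\<bar>cos \<omega>\<bar> < 1"
    unfolding \<omega>_def cos_free_frequency abs_divide abs_of_pos[OF sqrt_one_plus_square_pos]
    by (subst divide_less_eq_1_pos[OF sqrt_one_plus_square_pos])
  moreover have "sin \<omega> > 0"
    using dispersion_norm_pos[OF assms(1), of q] sqrt_one_plus_square_pos[of \<mu>]
    by (simp add: \<omega>_def sin_free_frequency del: real_sqrt_gt_0_iff)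
  moreover have "sqrt (4 - (2 * cos \<omega>)\<^sup>2) = 2 * sin \<omega>"
    using \<open>sin \<omega> > 0\<close> by (intro real_sqrt_unique) (simp_all add: power_mult_distrib cos_squared_eq)
  ultimately show disc: "disc_root \<tau> = 2 * \<i> * sin \<omega>"
    unfolding trace by (subst disc_root_of_real) (auto simp: abs_less_iff)
  show "eig_s \<tau> = cis (- \<omega>)" "eig_u \<tau> = cis \<omega>"
    unfolding eig_s_def eig_u_def disc unfolding trace by (simp_all add: complex_eq_iff)
qed

lemma free_transfer_projections:
  fixes q :: real
  assumes "\<mu> > 0"
  defines "a \<equiv> trig_eval (transfer11 \<mu> 0) q" and "b \<equiv> trig_eval (transfer12 \<mu> 0) q"
    and "c \<equiv> trig_eval (transfer21 \<mu> 0) q" and "d \<equiv> trig_eval (transfer22 \<mu> 0) q"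
    and "R \<equiv> dispersion_norm \<mu> q"
  shows "proj_s1 a b c d 0 2 = \<i> * (\<mu> / R)" "proj_u1 a b c d 0 2 = - \<i> * (\<mu> / R)"
    "proj_s2 a b c d 0 2 = 1 + sin q / R" "proj_u2 a b c d 0 2 = 1 - sin q / R"
proof -
  define A \<omega> where "A = sqrt (1 + \<mu>\<^sup>2)" and "\<omega> = free_frequency \<mu> q"
  have A: "A > 0" and R: "R > 0"
    using dispersion_norm_pos[OF assms(1)] by (simp_all add: A_def R_def add_pos_nonneg)
  have entries: "a = cis q / A" "b = \<mu> / A" "c = - \<mu> / A" "d = cis (- q) / A"
    by (simp_all add: a_def b_def c_def d_def transfer11_def transfer12_def transfer21_def transfer22_def
        transfer_scale_def A_def)
  have cos_sin: "cos \<omega> = cos q / A" "sin \<omega> = R / A"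
    by (simp_all add: \<omega>_def A_def R_def cos_free_frequency sin_free_frequency)
  note spectrum = free_transfer_spectrum[OF assms(1), of q, folded a_def d_def \<omega>_def, unfolded cos_sin]
  have quotient: "x / (2 * \<i> * (R / A)) = z" if "x = z * (2 * \<i> * (R / A))" for x z :: complex
    using that A R by simp
  show "proj_s1 a b c d 0 2 = \<i> * (\<mu> / R)" "proj_u1 a b c d 0 2 = - \<i> * (\<mu> / R)"
    "proj_s2 a b c d 0 2 = 1 + sin q / R" "proj_u2 a b c d 0 2 = 1 - sin q / R"
    unfolding proj_s1_def proj_u1_def proj_s2_def proj_u2_def spectrum
    by (rule quotient, use A R in \<open>simp add: entries complex_eq_iff cos_sin field_simps\<close>)+
qed

lemma checkers_green_free:
  assumes "\<mu> > 0"
  shows "checkers_green1 \<mu> 0 t q = (if 0 \<le> t then free_kernel1 \<mu> t q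
      else cis (free_frequency \<mu> q * of_int t) * (\<i> * (\<mu> / dispersion_norm \<mu> q)))"
    and "checkers_green2 \<mu> 0 t q = (if 0 \<le> t then free_kernel2 \<mu> t q
      else - cis (free_frequency \<mu> q * of_int t) * (1 - sin q / dispersion_norm \<mu> q))"
proof -
  define \<omega> where "\<omega> = free_frequency \<mu> q"
  have powers: "cis (- \<omega>) ^ nat t = cis (- (\<omega> * of_int t))" if "0 \<le> t"
    using that Complex.DeMoivre[of "- \<omega>" "nat t"] by (simp add: mult.commute)
  have inverse_powers: "cis (- \<omega>) ^ nat (- t) = cis (\<omega> * of_int t)" if "\<not> 0 \<le> t"
    using that Complex.DeMoivre[of "- \<omega>" "nat (- t)"] by (simp add: mult.commute)
  show "checkers_green1 \<mu> 0 t q = (if 0 \<le> t then free_kernel1 \<mu> t q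
      else cis (free_frequency \<mu> q * of_int t) * (\<i> * (\<mu> / dispersion_norm \<mu> q)))"
    and "checkers_green2 \<mu> 0 t q = (if 0 \<le> t then free_kernel2 \<mu> t q
      else - cis (free_frequency \<mu> q * of_int t) * (1 - sin q / dispersion_norm \<mu> q))"
    unfolding checkers_green1_def checkers_green2_def green1_def green2_def free_transfer_spectrum[OF assms]
      free_transfer_projections[OF assms] \<omega>_def[symmetric]
    using powers inverse_powers by (auto simp: free_kernel1_def free_kernel2_def \<omega>_def)
qed

lemma checkers_green_periodic:
  "checkers_green1 \<mu> \<delta> t (q + 2 * pi) = checkers_green1 \<mu> \<delta> t q"
  "checkers_green2 \<mu> \<delta> t (q + 2 * pi) = checkers_green2 \<mu> \<delta> t q"
  by (simp_all only: checkers_green1_def checkers_green2_def trig_eval_periodic)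

lemma continuous_on_checkers_green_free:
  assumes "\<mu> > 0"
  shows "continuous_on UNIV (checkers_green1 \<mu> 0 t)" "continuous_on UNIV (checkers_green2 \<mu> 0 t)"
  unfolding checkers_green1_def[abs_def] checkers_green2_def[abs_def]
  using assms transfer_trace_admissible[of \<mu> 0]
  by (auto intro!: continuous_on_green continuous_on_trig_eval continuous_on_id)

lemma checkers_green_shift_pi:
  assumes "\<mu> > 0" "t < 0"
  shows "checkers_green1 \<mu> 0 t (q + pi) = (if even t then 1 else -1) * free_kernel1 \<mu> t q"
    and "checkers_green2 \<mu> 0 t (q + pi) = - (if even t then 1 else -1) * free_kernel2 \<mu> t q"
proof -
  have "cis (free_frequency \<mu> (q + pi) * of_int t) = cis (pi * of_int t) * cis (- (free_frequency \<mu> q * of_int t))"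
    unfolding free_frequency_shift_pi by (simp add: cis_mult left_diff_distrib)
  moreover have "cis (pi * of_int t) = (if even t then 1 else -1)"
    by (simp add: complex_eq_iff)
  moreover have "dispersion_norm \<mu> (q + pi) = dispersion_norm \<mu> q"
    by (simp add: dispersion_norm_def)
  ultimately show "checkers_green1 \<mu> 0 t (q + pi) = (if even t then 1 else -1) * free_kernel1 \<mu> t q"
    and "checkers_green2 \<mu> 0 t (q + pi) = - (if even t then 1 else -1) * free_kernel2 \<mu> t q"
    using assms by (simp_all add: checkers_green_free free_kernel1_def free_kernel2_def diff_conv_add_uminus)
qed

lemma fourier_coeff_checkers_green_free:
  assumes "\<mu> > 0"
  shows "fourier_coeff (checkers_green1 \<mu> 0 t) k = (if t < 0 \<and> even (k + t + 1) then -1 else 1) * fourier_coeff (free_kernel1 \<mu> t) k"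
    and "fourier_coeff (checkers_green2 \<mu> 0 t) k = (if t < 0 \<and> even (k + t) then -1 else 1) * fourier_coeff (free_kernel2 \<mu> t) k"
proof -
  note shift = fourier_coeff_shift_pi[OF continuous_on_checkers_green_free(1)[OF assms] checkers_green_periodic(1)]
    fourier_coeff_shift_pi[OF continuous_on_checkers_green_free(2)[OF assms] checkers_green_periodic(2)]
  have free: "checkers_green1 \<mu> 0 t = free_kernel1 \<mu> t" "checkers_green2 \<mu> 0 t = free_kernel2 \<mu> t" if "\<not> t < 0"
    using that by (simp_all add: fun_eq_iff checkers_green_free[OF assms])
  show "fourier_coeff (checkers_green1 \<mu> 0 t) k = (if t < 0 \<and> even (k + t + 1) then -1 else 1) * fourier_coeff (free_kernel1 \<mu> t) k"
  proof (cases "t < 0")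
    case True
    then show ?thesis
      by (simp add: shift checkers_green_shift_pi[OF assms True] fourier_coeff_cmult)
  qed (simp add: free)
  show "fourier_coeff (checkers_green2 \<mu> 0 t) k = (if t < 0 \<and> even (k + t) then -1 else 1) * fourier_coeff (free_kernel2 \<mu> t) k"
  proof (cases "t < 0")
    case True
    then show ?thesis
      by (simp add: shift checkers_green_shift_pi[OF assms True] fourier_coeff_cmult fourier_coeff_uminus)
  qed (simp add: free)
qed

lemma omega_eq_free_frequency: "\<epsilon> \<noteq> 0 \<Longrightarrow> omega m \<epsilon> p * \<epsilon> = free_frequency (m * \<epsilon>) (p * \<epsilon>)"
  by (simp add: omega_def free_frequency_def power_mult_distrib)

lemma fourier_coeff_free_kernel:
  "fourier_coeff (free_kernel1 \<mu> n) k
     = \<i> * \<mu> / (2 * pi) * integral {-pi..pi} (\<lambda>q. cis (q * of_int k - free_frequency \<mu> q * of_int n) / dispersion_norm \<mu> q)"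
  "fourier_coeff (free_kernel2 \<mu> n) k
     = 1 / (2 * pi) * integral {-pi..pi} (\<lambda>q. (1 + sin q / dispersion_norm \<mu> q) * cis (q * of_int k - free_frequency \<mu> q * of_int n))"
proof -
  have phase: "cis (q * of_int k) * cis (- (free_frequency \<mu> q * of_int n))
      = cis (q * of_int k - free_frequency \<mu> q * of_int n)" for q
    by (simp add: cis_mult)
  have "(\<lambda>q. cis (q * of_int k) * free_kernel1 \<mu> n q)
      = (\<lambda>q. (\<i> * \<mu>) * (cis (q * of_int k - free_frequency \<mu> q * of_int n) / dispersion_norm \<mu> q))"
    "(\<lambda>q. cis (q * of_int k) * free_kernel2 \<mu> n q)
      = (\<lambda>q. (1 + sin q / dispersion_norm \<mu> q) * cis (q * of_int k - free_frequency \<mu> q * of_int n))"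
    unfolding free_kernel1_def free_kernel2_def mult.assoc[symmetric] phase by (simp_all add: fun_eq_iff)
  note kernels = this
  show "fourier_coeff (free_kernel1 \<mu> n) k
     = \<i> * \<mu> / (2 * pi) * integral {-pi..pi} (\<lambda>q. cis (q * of_int k - free_frequency \<mu> q * of_int n) / dispersion_norm \<mu> q)"
    "fourier_coeff (free_kernel2 \<mu> n) k
     = 1 / (2 * pi) * integral {-pi..pi} (\<lambda>q. (1 + sin q / dispersion_norm \<mu> q) * cis (q * of_int k - free_frequency \<mu> q * of_int n))"
    unfolding fourier_coeff_def kernels integral_mult_right by simp_all
qed

lemma lattice_propagator_integral:
  assumes m: "m > 0" and \<epsilon>: "\<epsilon> > 0"
  shows "A1t (\<epsilon> * of_int k) (\<epsilon> * of_int n) m \<epsilon> = (if n < 0 \<and> even (k + n + 1) then -1 else 1) *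
      (\<i> * complex_of_real (m * \<epsilon>\<^sup>2 / (2 * pi))) * integral {- pi / \<epsilon> .. pi / \<epsilon>}
        (\<lambda>p. exp (\<i> * complex_of_real (p * (\<epsilon> * of_int k) - omega m \<epsilon> p * (\<epsilon> * of_int n)))
           / complex_of_real (sqrt (m\<^sup>2 * \<epsilon>\<^sup>2 + (sin (p * \<epsilon>))\<^sup>2)))" (is ?A1)
    and "A2t (\<epsilon> * of_int k) (\<epsilon> * of_int n) m \<epsilon> = (if n < 0 \<and> even (k + n) then -1 else 1) *
      complex_of_real (\<epsilon> / (2 * pi)) * integral {- pi / \<epsilon> .. pi / \<epsilon>}
        (\<lambda>p. complex_of_real (1 + sin (p * \<epsilon>) / sqrt (m\<^sup>2 * \<epsilon>\<^sup>2 + (sin (p * \<epsilon>))\<^sup>2))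
           * exp (\<i> * complex_of_real (p * (\<epsilon> * of_int k) - omega m \<epsilon> p * (\<epsilon> * of_int n))))" (is ?A2)
proof -
  define \<mu> where "\<mu> = m * \<epsilon>"
  have \<mu>: "\<mu> > 0"
    using m \<epsilon> by (simp add: \<mu>_def)
  define F1 F2 where
    "F1 q = cis (q * of_int k - free_frequency \<mu> q * of_int n) / dispersion_norm \<mu> q" and
    "F2 q = (1 + sin q / dispersion_norm \<mu> q) * cis (q * of_int k - free_frequency \<mu> q * of_int n)" for q
  have "dispersion_norm \<mu> q \<noteq> 0" for q
    using dispersion_norm_pos[OF \<mu>] by (simp add: less_imp_neq[symmetric])
  then have cont: "continuous_on {-pi..pi} F1" "continuous_on {-pi..pi} F2"
    unfolding F1_def[abs_def] F2_def[abs_def]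
    by (auto intro!: continuous_intros continuous_on_free_frequency simp: dispersion_norm_def)
  have "omega m \<epsilon> p * (\<epsilon> * of_int n) = free_frequency \<mu> (p * \<epsilon>) * of_int n" for p
    using omega_eq_free_frequency[of \<epsilon> m p] \<epsilon> by (simp add: \<mu>_def mult.assoc[symmetric])
  then have phase: "p * (\<epsilon> * of_int k) - omega m \<epsilon> p * (\<epsilon> * of_int n)
      = p * \<epsilon> * of_int k - free_frequency \<mu> (p * \<epsilon>) * of_int n" for p
    by (simp add: mult.assoc)
  have norm: "sqrt (m\<^sup>2 * \<epsilon>\<^sup>2 + (sin (p * \<epsilon>))\<^sup>2) = dispersion_norm \<mu> (p * \<epsilon>)" for p
    by (simp add: \<mu>_def dispersion_norm_def power_mult_distrib)
  have integrands:
    "(\<lambda>p. exp (\<i> * complex_of_real (p * (\<epsilon> * of_int k) - omega m \<epsilon> p * (\<epsilon> * of_int n)))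
       / complex_of_real (sqrt (m\<^sup>2 * \<epsilon>\<^sup>2 + (sin (p * \<epsilon>))\<^sup>2))) = (\<lambda>p. F1 (p * \<epsilon>))"
    "(\<lambda>p. complex_of_real (1 + sin (p * \<epsilon>) / sqrt (m\<^sup>2 * \<epsilon>\<^sup>2 + (sin (p * \<epsilon>))\<^sup>2))
       * exp (\<i> * complex_of_real (p * (\<epsilon> * of_int k) - omega m \<epsilon> p * (\<epsilon> * of_int n)))) = (\<lambda>p. F2 (p * \<epsilon>))"
    unfolding phase norm by (simp_all add: F1_def F2_def cis_conv_exp)
  show ?A1 ?A2
    unfolding lattice_propagator_fourier_coeff[OF m \<epsilon>] integrands integral_rescale[OF \<epsilon> cont(1)]
      integral_rescale[OF \<epsilon> cont(2)] fourier_coeff_checkers_green_free[OF \<mu>[unfolded \<mu>_def]]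
      fourier_coeff_free_kernel
    unfolding F1_def[abs_def] F2_def[abs_def] \<mu>_def
    using \<epsilon> by (simp_all add: power2_eq_square field_simps)
qed

lemma sgnA_lattice_point:
  assumes "\<epsilon> > 0"
  shows "sgnA j (\<epsilon> * of_int k) (\<epsilon> * of_int n) \<epsilon> = (if n < 0 \<and> even (k + n + int j) then -1 else 1)"
proof -
  have "(\<epsilon> * of_int k + \<epsilon> * of_int n) / \<epsilon> + real j = of_int (k + n + int j)"
    using assms by (simp add: field_simps)
  moreover have "\<epsilon> * of_int n < 0 \<longleftrightarrow> n < 0"
    using assms by (simp add: mult_less_0_iff)
  ultimately show ?thesis
    unfolding sgnA_def by (simp only: even_real_of_int)
qed

theorem proposition1:
  fixes m \<epsilon> x t :: real
  assumes "m > 0" and "\<epsilon> > 0" and "x / \<epsilon> \<in> \<int>" and "t / \<epsilon> \<in> \<int>"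
  shows "(A1t x t m \<epsilon> = sgnA 1 x t \<epsilon> * (\<i> * complex_of_real (m * \<epsilon>\<^sup>2 / (2 * pi))) *
           integral {- pi / \<epsilon> .. pi / \<epsilon>}
             (\<lambda>p. exp (\<i> * complex_of_real (p * x - omega m \<epsilon> p * t))
                  / complex_of_real (sqrt (m\<^sup>2 * \<epsilon>\<^sup>2 + (sin (p * \<epsilon>))\<^sup>2)))) \<and>
         A2t x t m \<epsilon> = sgnA 2 x t \<epsilon> * complex_of_real (\<epsilon> / (2 * pi)) *
           integral {- pi / \<epsilon> .. pi / \<epsilon>}
             (\<lambda>p. complex_of_real (1 + sin (p * \<epsilon>) / sqrt (m\<^sup>2 * \<epsilon>\<^sup>2 + (sin (p * \<epsilon>))\<^sup>2))
                  * exp (\<i> * complex_of_real (p * x - omega m \<epsilon> p * t)))"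
proof -
  obtain k n where x: "x = \<epsilon> * of_int k" and t: "t = \<epsilon> * of_int n"
    using assms(2-4) by (metis Ints_cases nonzero_mult_div_cancel_left less_irrefl times_divide_eq_right)
  show ?thesis
    unfolding x t sgnA_lattice_point[OF assms(2)] lattice_propagator_integral[OF assms(1,2)]
    by (simp add: add.assoc)
qed


end
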